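(* Let $S_1,S_2\subseteq\mathbb{F}_q$ with $\#S_1=\#S_2=s$, let $0\le i\le j<s$, and let $$L_1=\{N\in\Delta(s,s)\mid N\preceq_{\deg}X^iY^j\},\qquad L_2=\{N\in\Delta(s,s)\mid N\prec_{\deg}X^jY^i\}.$$ Then $C(L_1)$ and $C(L_2)$ have length $n=s^2$ and codimension $\ell=j-i+1$, and $$M_1(C(L_1),C(L_2))=(s-i)(s-j),\qquad M_1(C(L_2)^\perp,C(L_1)^\perp)\ge(i+1)(j+1),$$ and for $v=2,\dots,\ell$, $$M_v(C(L_1),C(L_2))=(s-i)(s-j)+\sum_{t=2}^v\big((s-i)-(t-1)\big)=(s-i)(s-j+v-1)-\frac{v(v-1)}{2},$$ $$M_v(C(L_2)^\perp,C(L_1)^\perp)\ge(i+1)(j+1)+\sum_{t=2}^v\big((j+1)-(t-1)\big)=(i+v)(j+1)-\frac{v(v-1)}{2}.$$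
   Context: $q$ is a prime power. $S_1\times S_2=\{\alpha_1,\dots,\alpha_n\}$, $n=s^2$. $\Delta(s,s)=\{X^aY^b\mid 0\le a,b<s\}$. For $L\subseteq\Delta(s,s)$, $C(L)\subseteq\mathbb{F}_q^n$ is the span of $(N(\alpha_1),\dots,N(\alpha_n))$, $N\in L$; $C^\perp$ is the Euclidean dual. $\prec_{\deg}$ is the degree lexicographic ordering: $X^aY^b\prec_{\deg}X^cY^d$ iff $a+b<c+d$, or $a+b=c+d$ and $b<d$. For linear codes $C_2\subsetneq C_1\subseteq\mathbb{F}_q^n$ and $1\le v\le\dim C_1-\dim C_2$, $M_v(C_1,C_2)=\min\{\#\mathrm{Supp}\,U\mid U\subseteq C_1\text{ subspace},\ \dim U=v,\ U\cap C_2=\{\vec0\}\}$, with $\mathrm{Supp}\,U$ the set of coordinates where some word of $U$ is nonzero. *)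

theory Defs
  imports Complex_Main "HOL-Library.Function_Algebras"
begin

text \<open>Monomials X^a Y^b are represented by exponent pairs (a,b).
  Coordinates are indexed by the evaluation points p in S1 x S2 (the order
  alpha_1..alpha_n of the points is irrelevant for dimensions and supports);
  a vector of F_q^n is a function on points that vanishes outside S1 x S2.\<close>

definition Delta :: "nat \<Rightarrow> (nat \<times> nat) set" where
  "Delta s = {..<s} \<times> {..<s}"

definition deglex_less :: "nat \<times> nat \<Rightarrow> nat \<times> nat \<Rightarrow> bool" where
  "deglex_less m m' = (fst m + snd m < fst m' + snd m' \<or>
      (fst m + snd m = fst m' + snd m' \<and> snd m < snd m'))"

definition deglex_le :: "nat \<times> nat \<Rightarrow> nat \<times> nat \<Rightarrow> bool" where
  "deglex_le m m' = (deglex_less m m' \<or> m = m')"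

definition vscale :: "'a::field \<Rightarrow> ('b \<Rightarrow> 'a) \<Rightarrow> ('b \<Rightarrow> 'a)" where
  "vscale c f = (\<lambda>x. c * f x)"

lemma vector_space_vscale: "vector_space (vscale :: 'a::field \<Rightarrow> ('b \<Rightarrow> 'a) \<Rightarrow> _)"
  by unfold_locales (auto simp: vscale_def algebra_simps fun_eq_iff)

definition evvec :: "('a::field \<times> 'a) set \<Rightarrow> nat \<times> nat \<Rightarrow> ('a \<times> 'a \<Rightarrow> 'a)" where
  "evvec P m = (\<lambda>p. if p \<in> P then fst p ^ fst m * snd p ^ snd m else 0)"

definition evcode :: "('a::field \<times> 'a) set \<Rightarrow> (nat \<times> nat) set \<Rightarrow> ('a \<times> 'a \<Rightarrow> 'a) set" where
  "evcode P L = module.span vscale (evvec P ` L)"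

definition dual_code :: "('a::field \<times> 'a) set \<Rightarrow> ('a \<times> 'a \<Rightarrow> 'a) set \<Rightarrow> ('a \<times> 'a \<Rightarrow> 'a) set" where
  "dual_code P C = {w. (\<forall>p. p \<notin> P \<longrightarrow> w p = 0) \<and> (\<forall>c\<in>C. (\<Sum>p\<in>P. c p * w p) = 0)}"

definition supp :: "('b \<Rightarrow> 'a::zero) set \<Rightarrow> 'b set" where
  "supp U = {x. \<exists>u\<in>U. u x \<noteq> 0}"

definition codim :: "('b \<Rightarrow> 'a::field) set \<Rightarrow> ('b \<Rightarrow> 'a) set \<Rightarrow> nat" where
  "codim C1 C2 = vector_space.dim vscale C1 - vector_space.dim vscale C2"

definition RGHW :: "nat \<Rightarrow> ('b \<Rightarrow> 'a::field) set \<Rightarrow> ('b \<Rightarrow> 'a) set \<Rightarrow> nat" where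
  "RGHW v C1 C2 = Min {card (supp U) | U. U \<subseteq> C1 \<and> module.subspace vscale U \<and>
       vector_space.dim vscale U = v \<and> U \<inter> C2 = {0}}"

end

theory Submission
  imports Defs
begin

text \<open>The Newton polynomials g_a(X) = (X - x_0) ... (X - x_(a-1)) give a basis g_a(X) g_b(Y),
  (a, b) \<in> Delta(s, s), of the functions on S1 \<times> S2 that is triangular with respect to the monomials,
  so C(L) is spanned by the basis vectors indexed by L whenever L is closed under divisibility, and
  it has an explicit biorthogonal dual basis. Multiplication by X or Y shifts both bases by one
  step. For a subspace U of C(L1) meeting C(L2) trivially, the deglex-largest index at which a vector
  has a nonzero coordinate lies on the antidiagonal L1 - L2, and these top indices take at least
  dim U values on U. The top indices of vectors supported on a set T are closed under the upward
  shifts and number at most #T, so Supp U is at least as large as the staircase spanned by v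
  antidiagonal points, which has at least (s - i)(s - j + v - 1) - v(v - 1)/2 points; the span of
  the basis vectors at the last v antidiagonal points attains this bound. For the dual codes the
  same argument with the deglex-smallest index, the dual basis and downward shifts gives the lower
  bound (i + v)(j + 1) - v(v - 1)/2.\<close>

interpretation VS: vector_space "vscale :: 'a::field \<Rightarrow> ('b \<Rightarrow> 'a) \<Rightarrow> ('b \<Rightarrow> 'a)"
  by (rule vector_space_vscale)

lemma vector_space_times: "vector_space ((*) :: 'a::field \<Rightarrow> 'a \<Rightarrow> 'a)"
  by unfold_locales (auto simp: algebra_simps)

lemma linear_functionalI:
  fixes f :: "('b \<Rightarrow> 'a::field) \<Rightarrow> 'a"
  assumes "\<And>x y. f (x + y) = f x + f y" "\<And>c x. f (vscale c x) = c * f x"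
  shows "Vector_Spaces.linear vscale (*) f"
  using assms vector_space_vscale vector_space_times by (auto simp: Vector_Spaces.linear_iff)

lemma linear_vscaleI:
  fixes f :: "('b \<Rightarrow> 'a::field) \<Rightarrow> ('c \<Rightarrow> 'a)"
  assumes "\<And>x y. f (x + y) = f x + f y" "\<And>c x. f (vscale c x) = vscale c (f x)"
  shows "Vector_Spaces.linear vscale vscale f"
  using assms by (simp add: Vector_Spaces.linear_iff vector_space_vscale)

lemma linear_functional_eq_0_on_span:
  fixes f :: "('b \<Rightarrow> 'a::field) \<Rightarrow> 'a"
  assumes "Vector_Spaces.linear vscale (*) f" "x \<in> VS.span S" "\<And>y. y \<in> S \<Longrightarrow> f y = 0"
  shows "f x = 0"
  using module_hom.eq_0_on_span[OF assms(1)[unfolded linear_iff_module_hom]] assms(2,3) by blast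

lemma linear_image_in_span:
  fixes f :: "('b \<Rightarrow> 'a::field) \<Rightarrow> ('c \<Rightarrow> 'a)"
  assumes f: "Vector_Spaces.linear vscale vscale f" and S: "f ` S \<subseteq> VS.span T" and x: "x \<in> VS.span S"
  shows "f x \<in> VS.span T"
proof -
  have "f x \<in> VS.span (f ` S)"
    using x module_hom.span_image[OF f[unfolded linear_iff_module_hom]] by blast
  also have "\<dots> \<subseteq> VS.span T"
    using S VS.span_mono VS.span_span by metis
  finally show ?thesis .
qed

lemma eval_eq_0_on_span:
  assumes "F \<in> VS.span S" "\<And>G. G \<in> S \<Longrightarrow> G p = 0"
  shows "F p = 0"
  by (rule linear_functional_eq_0_on_span[where f = "\<lambda>F. F p"])
     (use assms in \<open>auto intro: linear_functionalI simp: vscale_def\<close>)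

section \<open>Newton polynomials and their dual basis\<close>

definition newton :: "(nat \<Rightarrow> 'a::comm_ring_1) \<Rightarrow> nat \<Rightarrow> 'a \<Rightarrow> 'a" where
  "newton xs a x = (\<Prod>t<a. x - xs t)"

lemma newton_0: "newton xs 0 = (\<lambda>x. 1)"
  unfolding newton_def by auto

lemma newton_Suc: "newton xs (Suc a) x = newton xs a x * (x - xs a)"
  unfolding newton_def by simp

lemma times_newton: "x * newton xs a x = newton xs (Suc a) x + xs a * newton xs a x"
  unfolding newton_Suc by (simp add: algebra_simps)

lemma newton_eq_0: "k < a \<Longrightarrow> newton xs a (xs k) = 0"
  unfolding newton_def by (rule prod_zero) auto

lemma newton_nonzero:
  fixes xs :: "nat \<Rightarrow> 'a::field"
  assumes "inj_on xs {..<s}" "a \<le> k" "k < s"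
  shows "newton xs a (xs k) \<noteq> 0"
  using assms inj_onD[OF assms(1), of k] unfolding newton_def by (force simp: prod_zero_iff)

text \<open>The coefficients of the functional extracting the Newton coordinate of index a from the
  values at xs 0, ..., xs (s-1), computed by back substitution in the triangular system.\<close>

function newton_dual :: "(nat \<Rightarrow> 'a::field) \<Rightarrow> nat \<Rightarrow> nat \<Rightarrow> 'a" where
  "newton_dual xs a k = (if a < k then 0 else if k = a then 1 / newton xs a (xs a)
     else - (\<Sum>k'\<in>{k<..a}. newton xs k (xs k') * newton_dual xs a k') / newton xs k (xs k))"
  by pat_completeness auto
termination by (relation "measure (\<lambda>(xs, a, k). a - k)") auto

declare newton_dual.simps [simp del]

lemma newton_dual_gt: "a < k \<Longrightarrow> newton_dual xs a k = 0"
  by (simp add: newton_dual.simps)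

lemma sum_newton_newton_dual:
  fixes xs :: "nat \<Rightarrow> 'a::field"
  assumes inj: "inj_on xs {..<s}" and "a < s"
  shows "(\<Sum>k<s. newton xs a' (xs k) * newton_dual xs a k) = (if a' = a then 1 else 0)"
proof -
  have "(\<Sum>k<s. newton xs a' (xs k) * newton_dual xs a k)
      = (\<Sum>k\<in>{a'..a}. newton xs a' (xs k) * newton_dual xs a k)"
    using \<open>a < s\<close> by (intro sum.mono_neutral_right) (auto simp: newton_dual_gt newton_eq_0)
  also have "\<dots> = (if a' = a then 1 else 0)"
  proof (cases "a' \<le> a")
    case True
    have "newton xs a' (xs a') \<noteq> 0" using newton_nonzero[OF inj, of a' a'] True \<open>a < s\<close> by auto
    moreover have "{a'..a} = insert a' {a'<..a}" using True by auto
    moreover have "newton_dual xs a a' = (if a' = a then 1 / newton xs a (xs a)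
        else - (\<Sum>k'\<in>{a'<..a}. newton xs a' (xs k') * newton_dual xs a k') / newton xs a' (xs a'))"
      using True by (subst newton_dual.simps) auto
    ultimately show ?thesis by auto
  qed auto
  finally show ?thesis .
qed

lemma eq_0_if_newton_moments_eq_0:
  fixes xs :: "nat \<Rightarrow> 'a::field"
  assumes inj: "inj_on xs {..<s}"
    and moments: "\<And>a. a < s \<Longrightarrow> (\<Sum>k<s. u k * newton xs a (xs k)) = 0"
    and "k < s"
  shows "u k = 0"
proof (rule ccontr)
  assume "u k \<noteq> 0"
  define Z where "Z = {k. k < s \<and> u k \<noteq> 0}"
  define m where "m = Max Z"
  have "finite Z" "k \<in> Z" using \<open>u k \<noteq> 0\<close> \<open>k < s\<close> by (auto simp: Z_def)
  then have m: "m \<in> Z" and above_m: "\<And>k'. k' \<in> Z \<Longrightarrow> k' \<le> m"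
    unfolding m_def by (auto intro: Max_in)
  txt \<open>Only the top nonzero index survives in the moment of order m.\<close>
  have "(\<Sum>k<s. u k * newton xs m (xs k)) = (\<Sum>k\<in>{m}. u k * newton xs m (xs k))"
  proof (intro sum.mono_neutral_right ballI)
    fix k' assume k': "k' \<in> {..<s} - {m}"
    show "u k' * newton xs m (xs k') = 0"
    proof (cases "k' < m")
      case False
      then have "k' \<notin> Z" using above_m k' by force
      then show ?thesis using k' by (simp add: Z_def)
    qed (simp add: newton_eq_0)
  qed (use m in \<open>auto simp: Z_def\<close>)
  also have "\<dots> \<noteq> 0" using m newton_nonzero[OF inj, of m m] by (auto simp: Z_def)
  finally show False using moments m by (auto simp: Z_def)
qed

lemma times_newton_dual:
  fixes xs :: "nat \<Rightarrow> 'a::field"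
  assumes inj: "inj_on xs {..<s}" and "a < s" and "k < s"
  shows "xs k * newton_dual xs a k
    = (if a = 0 then 0 else newton_dual xs (a - 1) k) + xs a * newton_dual xs a k"
proof -
  define u where "u k = xs k * newton_dual xs a k
    - ((if a = 0 then 0 else newton_dual xs (a - 1) k) + xs a * newton_dual xs a k)" for k
  txt \<open>Both sides have the same moments against the Newton polynomials, by times_newton and
    sum_newton_newton_dual.\<close>
  have "u k = 0"
  proof (rule eq_0_if_newton_moments_eq_0[OF inj _ \<open>k < s\<close>])
    fix a' assume "a' < s"
    define D where "D b = (\<Sum>k<s. newton xs b (xs k) * newton_dual xs a k)" for b
    define D' where "D' = (\<Sum>k<s. newton xs a' (xs k) * newton_dual xs (a - 1) k)"
    have "u k * newton xs a' (xs k) = newton xs (Suc a') (xs k) * newton_dual xs a k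
        + xs a' * (newton xs a' (xs k) * newton_dual xs a k)
        - ((if a = 0 then 0 else newton xs a' (xs k) * newton_dual xs (a - 1) k)
           + xs a * (newton xs a' (xs k) * newton_dual xs a k))" for k
      unfolding u_def newton_Suc by (cases "a = 0") (simp_all add: algebra_simps)
    then have "(\<Sum>k<s. u k * newton xs a' (xs k))
        = D (Suc a') + xs a' * D a' - ((if a = 0 then 0 else D') + xs a * D a')"
      unfolding D_def D'_def
      by (simp add: sum_subtractf sum.distrib sum_distrib_left if_distrib[of "\<lambda>f. f * _"])
    also have "\<dots> = 0"
      using sum_newton_newton_dual[OF inj, of a] sum_newton_newton_dual[OF inj, of "a - 1"] \<open>a < s\<close>
      unfolding D_def D'_def by auto
    finally show "(\<Sum>k<s. u k * newton xs a' (xs k)) = 0" .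
  qed
  then show ?thesis unfolding u_def by simp
qed

definition times_id :: "('a::comm_ring_1 \<Rightarrow> 'a) \<Rightarrow> ('a \<Rightarrow> 'a)" where
  "times_id f = (\<lambda>x. x * f x)"

lemma linear_times_id: "Vector_Spaces.linear vscale vscale (times_id :: ('a::field \<Rightarrow> 'a) \<Rightarrow> _)"
  by (rule linear_vscaleI) (auto simp: times_id_def vscale_def algebra_simps)

lemma power_in_span_newton:
  fixes xs :: "nat \<Rightarrow> 'a::field"
  shows "(\<lambda>x. x ^ a) \<in> VS.span (newton xs ` {..a})"
proof (induct a)
  case 0
  show ?case by (auto simp: newton_0 intro: VS.span_base)
next
  case (Suc a)
  have "times_id (newton xs a') \<in> VS.span (newton xs ` {..Suc a})" if "a' \<le> a" for a'
  proof -
    have "times_id (newton xs a') = newton xs (Suc a') + vscale (xs a') (newton xs a')"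
      by (auto simp: times_id_def vscale_def times_newton)
    moreover have "newton xs (Suc a') \<in> VS.span (newton xs ` {..Suc a})"
      "newton xs a' \<in> VS.span (newton xs ` {..Suc a})"
      using that by (auto intro: VS.span_base)
    ultimately show ?thesis by (simp add: VS.span_add VS.span_scale)
  qed
  then have "times_id (\<lambda>x. x ^ a) \<in> VS.span (newton xs ` {..Suc a})"
    by (intro linear_image_in_span[OF linear_times_id _ Suc]) auto
  then show ?case by (simp add: times_id_def)
qed

lemma newton_in_span_powers:
  fixes xs :: "nat \<Rightarrow> 'a::field"
  shows "newton xs a \<in> VS.span ((\<lambda>a' x. x ^ a') ` {..a})"
proof (induct a)
  case 0
  show ?case by (auto simp: newton_0 intro!: VS.span_base image_eqI[of _ _ 0])
next
  case (Suc a)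
  let ?M = "VS.span ((\<lambda>a' (x::'a). x ^ a') ` {..Suc a})"
  have "times_id (newton xs a) \<in> ?M"
    by (rule linear_image_in_span[OF linear_times_id _ Suc])
       (auto simp: times_id_def intro!: VS.span_base image_eqI[of _ _ "Suc _"])
  moreover have "newton xs a \<in> ?M"
    by (rule subsetD[OF VS.span_mono Suc]) auto
  ultimately have "times_id (newton xs a) - vscale (xs a) (newton xs a) \<in> ?M"
    by (intro VS.span_diff VS.span_scale)
  moreover have "times_id (newton xs a) - vscale (xs a) (newton xs a) = newton xs (Suc a)"
    by (auto simp: times_id_def vscale_def times_newton)
  ultimately show ?case by simp
qed

definition dotp :: "'p set \<Rightarrow> ('p \<Rightarrow> 'a::field) \<Rightarrow> ('p \<Rightarrow> 'a) \<Rightarrow> 'a" where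
  "dotp P F G = (\<Sum>p\<in>P. F p * G p)"

lemma sum_apply: "(\<Sum>x\<in>A. f x) p = (\<Sum>x\<in>A. f x p)"
  by (induct A rule: infinite_finite_induct) auto

lemma dotp_commute: "dotp P F G = dotp P G F"
  unfolding dotp_def by (simp add: mult.commute)

lemma dotp_zero_left [simp]: "dotp P 0 G = 0"
  and dotp_zero_right [simp]: "dotp P F 0 = 0"
  unfolding dotp_def by simp_all

lemma dotp_add_left: "dotp P (F + G) H = dotp P F H + dotp P G H"
  unfolding dotp_def by (simp add: distrib_right sum.distrib)

lemma dotp_scale_left: "dotp P (vscale c F) H = c * dotp P F H"
  unfolding dotp_def vscale_def by (simp add: sum_distrib_left mult.assoc)

lemma dotp_sum_left: "dotp P (\<Sum>x\<in>A. f x) H = (\<Sum>x\<in>A. dotp P (f x) H)"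
  unfolding dotp_def sum_apply sum_distrib_right by (rule sum.swap)

lemma dotp_mult_move: "dotp P (\<lambda>p. m p * F p) G = dotp P F (\<lambda>p. m p * G p)"
  unfolding dotp_def by (simp add: algebra_simps)

lemma dotp_eq_0_on_span:
  assumes "F \<in> VS.span S" "\<And>G. G \<in> S \<Longrightarrow> dotp P G H = 0"
  shows "dotp P F H = 0"
  by (rule linear_functional_eq_0_on_span[where f = "\<lambda>F. dotp P F H"])
     (use assms in \<open>auto intro: linear_functionalI simp: dotp_add_left dotp_scale_left\<close>)

section \<open>Leading indices\<close>

definition lead_index :: "'p set \<Rightarrow> ('n \<Rightarrow> 'p \<Rightarrow> 'a::field) \<Rightarrow> 'n set \<Rightarrow> ('n \<Rightarrow> nat)
    \<Rightarrow> ('p \<Rightarrow> 'a) \<Rightarrow> 'n \<Rightarrow> bool" where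
  "lead_index P Psi I r F N \<longleftrightarrow>
     N \<in> I \<and> dotp P F (Psi N) \<noteq> 0 \<and> (\<forall>N'\<in>I. r N' < r N \<longrightarrow> dotp P F (Psi N') = 0)"

lemma lead_index_unique:
  assumes "inj_on r I" "lead_index P Psi I r F N" "lead_index P Psi I r F N'"
  shows "N = N'"
proof (rule ccontr)
  assume "N \<noteq> N'"
  then have "r N \<noteq> r N'" using assms unfolding lead_index_def by (meson inj_on_eq_iff)
  then have "r N < r N' \<or> r N' < r N" by auto
  then show False using assms(2,3) unfolding lead_index_def by auto
qed

lemma lead_index_exists:
  assumes "finite I" "N \<in> I" "dotp P F (Psi N) \<noteq> 0"
  obtains N0 where "lead_index P Psi I r F N0"
proof -
  let ?Z = "{N\<in>I. dotp P F (Psi N) \<noteq> 0}"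
  have "finite ?Z" "?Z \<noteq> {}" using assms by auto
  from arg_min_if_finite[OF this, of r] show ?thesis
    using that unfolding lead_index_def by blast
qed

lemma independent_if_distinct_lead_indices:
  fixes Psi :: "'n \<Rightarrow> 'p \<Rightarrow> 'a::field"
  assumes "finite D" "inj_on r I" and lead: "\<And>N. N \<in> D \<Longrightarrow> lead_index P Psi I r (F N) N"
  shows "VS.independent (F ` D)" and "inj_on F D"
proof -
  show inj: "inj_on F D"
    using lead lead_index_unique[OF \<open>inj_on r I\<close>] by (metis inj_onI)
  show "VS.independent (F ` D)"
  proof (rule VS.independent_if_scalars_zero)
    fix c and G assume sum0: "(\<Sum>G\<in>F ` D. vscale (c G) G) = 0" and "G \<in> F ` D"
    show "c G = 0"
    proof (rule ccontr)
      assume "c G \<noteq> 0"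
      let ?Z = "{N\<in>D. c (F N) \<noteq> 0}"
      have "finite ?Z" "?Z \<noteq> {}" using \<open>finite D\<close> \<open>G \<in> F ` D\<close> \<open>c G \<noteq> 0\<close> by auto
      define N0 where "N0 = arg_min_on r ?Z"
      have N0: "N0 \<in> ?Z" and N0_min: "\<And>N. N \<in> ?Z \<Longrightarrow> \<not> r N < r N0"
        using arg_min_if_finite[OF \<open>finite ?Z\<close> \<open>?Z \<noteq> {}\<close>, of r] unfolding N0_def by auto
      txt \<open>Pairing the relation with Psi N0 kills every term except the one of index N0.\<close>
      have off_lead: "dotp P (F N) (Psi N0) = 0" if "N \<in> D" "c (F N) \<noteq> 0" "N \<noteq> N0" for N
      proof -
        have "N \<in> I" "N0 \<in> I" using that N0 lead unfolding lead_index_def by auto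
        then have "r N0 \<noteq> r N" using \<open>N \<noteq> N0\<close> inj_onD[OF \<open>inj_on r I\<close>] by metis
        then have "r N0 < r N" using N0_min[of N] that by auto
        then show ?thesis using lead[of N] that \<open>N0 \<in> I\<close> unfolding lead_index_def by auto
      qed
      have "(\<Sum>N\<in>D - {N0}. c (F N) * dotp P (F N) (Psi N0)) = 0"
      proof (intro sum.neutral ballI)
        fix N assume "N \<in> D - {N0}"
        then show "c (F N) * dotp P (F N) (Psi N0) = 0" using off_lead[of N] by (cases "c (F N) = 0") auto
      qed
      then have "dotp P (\<Sum>N\<in>D. vscale (c (F N)) (F N)) (Psi N0) = c (F N0) * dotp P (F N0) (Psi N0)"
        unfolding dotp_sum_left dotp_scale_left
        using sum.remove[OF \<open>finite D\<close>, of N0 "\<lambda>N. c (F N) * dotp P (F N) (Psi N0)"] N0 by simp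
      moreover have "(\<Sum>N\<in>D. vscale (c (F N)) (F N)) = 0"
        using sum0 sum.reindex[OF inj, of "\<lambda>G. vscale (c G) G"] by simp
      ultimately show False using N0 lead[of N0] unfolding lead_index_def by auto
    qed
  qed (use \<open>finite D\<close> in simp)
qed

definition delta :: "'p \<Rightarrow> 'p \<Rightarrow> 'a::zero_neq_one" where
  "delta p = (\<lambda>q. if q = p then 1 else 0)"

lemma supported_in_span_delta:
  fixes F :: "'p \<Rightarrow> 'a::field"
  assumes "finite T" "\<forall>p. p \<notin> T \<longrightarrow> F p = 0"
  shows "F \<in> VS.span (delta ` T)"
proof -
  have "F q = (\<Sum>p\<in>T. vscale (F p) (delta p)) q" for q
    unfolding sum_apply vscale_def delta_def using assms
    by (cases "q \<in> T") (auto simp: if_distrib cong: if_cong)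
  then have "F = (\<Sum>p\<in>T. vscale (F p) (delta p))" ..
  also have "\<dots> \<in> VS.span (delta ` T)"
    by (intro VS.span_sum VS.span_scale VS.span_base) auto
  finally show ?thesis .
qed

lemma card_lead_indices_supported_le:
  fixes Psi :: "'n \<Rightarrow> 'p \<Rightarrow> 'a::field"
  assumes "finite T" "finite I" "inj_on r I"
  shows "card {N. \<exists>F. (\<forall>p. p \<notin> T \<longrightarrow> F p = 0) \<and> lead_index P Psi I r F N} \<le> card T"
proof -
  define D where "D = {N. \<exists>F. (\<forall>p. p \<notin> T \<longrightarrow> F p = 0) \<and> lead_index P Psi I r F N}"
  define F where "F N = (SOME F. (\<forall>p. p \<notin> T \<longrightarrow> F p = 0) \<and> lead_index P Psi I r F N)" for N
  have F: "\<forall>p. p \<notin> T \<longrightarrow> F N p = 0" "lead_index P Psi I r (F N) N" if "N \<in> D" for N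
    using that someI_ex[of "\<lambda>F. (\<forall>p. p \<notin> T \<longrightarrow> F p = 0) \<and> lead_index P Psi I r F N"]
    unfolding D_def F_def by auto
  have "finite D"
    using \<open>finite I\<close> by (rule finite_subset[rotated]) (auto simp: D_def lead_index_def)
  note indep = independent_if_distinct_lead_indices[OF this \<open>inj_on r I\<close> F(2)]
  have "card D = card (F ` D)" using indep(2) by (simp add: card_image)
  also have "\<dots> \<le> card (delta ` T :: ('p \<Rightarrow> 'a) set)"
  proof -
    have "F ` D \<subseteq> VS.span (delta ` T)"
      using F(1) supported_in_span_delta[OF \<open>finite T\<close>] by blast
    then show ?thesis
      using VS.independent_span_bound[OF finite_imageI[OF \<open>finite T\<close>] indep(1)] by simp
  qed
  also have "\<dots> \<le> card T" using \<open>finite T\<close> card_image_le by blast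
  finally show ?thesis unfolding D_def .
qed

lemma dim_le_card_lead_indices:
  fixes Psi :: "'n \<Rightarrow> 'p \<Rightarrow> 'a::field"
  assumes "finite I" and "VS.subspace U"
    and nondeg: "\<And>F. F \<in> U \<Longrightarrow> F \<noteq> 0 \<Longrightarrow> \<exists>N\<in>I. dotp P F (Psi N) \<noteq> 0"
  shows "VS.dim U \<le> card {N. \<exists>F\<in>U. lead_index P Psi I r F N}"
proof -
  define D where "D = {N. \<exists>F\<in>U. lead_index P Psi I r F N}"
  have "finite D"
    using \<open>finite I\<close> by (rule finite_subset[rotated]) (auto simp: D_def lead_index_def)
  txt \<open>The coordinates of F at the leading indices of U already determine F \<in> U.\<close>
  define coord where "coord F = (\<lambda>N. if N \<in> D then dotp P F (Psi N) else 0)" for F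
  have lin: "Vector_Spaces.linear vscale vscale coord"
    by (rule linear_vscaleI)
       (auto simp: coord_def fun_eq_iff dotp_add_left dotp_scale_left[unfolded vscale_def] vscale_def)
  have "coord F \<noteq> 0" if F: "F \<in> U" "F \<noteq> 0" for F
  proof -
    obtain N where "N \<in> I" "dotp P F (Psi N) \<noteq> 0" using nondeg F by blast
    then obtain N0 where "lead_index P Psi I r F N0" using lead_index_exists[OF \<open>finite I\<close>] by metis
    then show ?thesis using F unfolding coord_def D_def lead_index_def by (auto simp: fun_eq_iff)
  qed
  then have "inj_on coord U"
    using module_hom.inj_on_iff_eq_0[OF lin[unfolded linear_iff_module_hom] \<open>VS.subspace U\<close>] by auto
  then have inj: "inj_on coord (VS.span U)" using \<open>VS.subspace U\<close> VS.span_eq_iff by metis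
  obtain B where B: "B \<subseteq> U" "VS.independent B" "U \<subseteq> VS.span B" "card B = VS.dim U"
    using VS.basis_exists[of U] by blast
  have "VS.independent (coord ` B)"
    using module_hom.independent_injective_image[OF lin[unfolded linear_iff_module_hom] B(2)]
      inj VS.span_mono[OF B(1)] by (meson inj_on_subset)
  moreover have "coord ` B \<subseteq> VS.span (delta ` D)"
    using \<open>finite D\<close> by (auto simp: coord_def intro!: supported_in_span_delta)
  ultimately have "card (coord ` B) \<le> card (delta ` D :: ('n \<Rightarrow> 'a) set)"
    using VS.independent_span_bound[OF finite_imageI[OF \<open>finite D\<close>], of "coord ` B" delta]
    by simp
  also have "\<dots> \<le> card D" using \<open>finite D\<close> card_image_le by blast
  finally have "card (coord ` B) \<le> card D" .
  moreover have "inj_on coord B"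
    using inj_on_subset[OF inj] B(1) VS.span_superset[of U] by blast
  ultimately show ?thesis using B(4) card_image unfolding D_def by fastforce
qed

definition biorth :: "'p set \<Rightarrow> ('n \<Rightarrow> 'p \<Rightarrow> 'a::field) \<Rightarrow> ('n \<Rightarrow> 'p \<Rightarrow> 'a) \<Rightarrow> 'n set \<Rightarrow> bool" where
  "biorth P X Y A \<longleftrightarrow> (\<forall>M\<in>A. \<forall>N\<in>A. dotp P (X M) (Y N) = (if M = N then 1 else 0))"

lemma biorth_inj: "biorth P X Y A \<Longrightarrow> inj_on X A"
  unfolding biorth_def by (rule inj_onI) (metis one_neq_zero)

lemma biorth_subset: "biorth P X Y A \<Longrightarrow> B \<subseteq> A \<Longrightarrow> biorth P X Y B"
  unfolding biorth_def by blast

lemma biorth_dotp_sum: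
  assumes "biorth P X Y A" "finite A" "M \<in> A"
  shows "dotp P (\<Sum>N\<in>A. vscale (u N) (X N)) (Y M) = u M"
proof -
  have "dotp P (\<Sum>N\<in>A. vscale (u N) (X N)) (Y M) = (\<Sum>N\<in>A. if N = M then u N else 0)"
    using assms unfolding dotp_sum_left dotp_scale_left biorth_def by (intro sum.cong) auto
  then show ?thesis using assms by simp
qed

lemma biorth_expansion:
  assumes bo: "biorth P X Y A" and "finite A" and "F \<in> VS.span (X ` A)"
  shows "F = (\<Sum>N\<in>A. vscale (dotp P F (Y N)) (X N))"
proof -
  obtain u where "F = (\<Sum>G\<in>X ` A. vscale (u G) G)"
    using assms VS.span_finite[of "X ` A"] by auto
  then have F: "F = (\<Sum>N\<in>A. vscale (u (X N)) (X N))"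
    using sum.reindex[OF biorth_inj[OF bo], of "\<lambda>G. vscale (u G) G"] by simp
  show ?thesis
    by (subst (1) F) (use biorth_dotp_sum[OF bo \<open>finite A\<close>] F in \<open>auto intro: sum.cong\<close>)
qed

lemma biorth_independent:
  assumes bo: "biorth P X Y A" and "finite A"
  shows "VS.independent (X ` A)"
proof (rule VS.independent_if_scalars_zero)
  fix c G assume "(\<Sum>G\<in>X ` A. vscale (c G) G) = 0" "G \<in> X ` A"
  then obtain M where "M \<in> A" "G = X M" "(\<Sum>N\<in>A. vscale (c (X N)) (X N)) = 0"
    using sum.reindex[OF biorth_inj[OF bo], of "\<lambda>G. vscale (c G) G"] by auto
  then show "c G = 0" using biorth_dotp_sum[OF bo \<open>finite A\<close>, of M "\<lambda>N. c (X N)"] by simp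
qed (use \<open>finite A\<close> in simp)

lemma biorth_dim_span:
  assumes "biorth P X Y A" "finite A" "B \<subseteq> A"
  shows "VS.dim (VS.span (X ` B)) = card B"
proof -
  have bo: "biorth P X Y B" "finite B"
    using assms biorth_subset finite_subset by blast+
  show ?thesis
    using VS.dim_span_eq_card_independent[OF biorth_independent[OF bo]] card_image[OF biorth_inj[OF bo(1)]]
    by simp
qed

section \<open>Counting lattice points under staircases\<close>

fun tri :: "nat \<Rightarrow> nat" where
  "tri 0 = 0"
| "tri (Suc n) = tri n + Suc n"

lemma tri_add: "tri (a + b) = tri a + tri b + a * b"
  by (induct b) (auto simp: algebra_simps)

lemma tri_mono: "a \<le> b \<Longrightarrow> tri a \<le> tri b"
  using tri_add[of a "b - a"] by simp

lemma tri_eq: "tri n = n * (n + 1) div 2"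
  by (induct n) (auto simp: algebra_simps)

lemma sum_decreasing_plus_tri:
  assumes "v - 1 \<le> A"
  shows "(\<Sum>t=2..v. A - (t - 1)) + tri (v - 1) = A * (v - 1)"
  using assms
proof (induct v)
  case (Suc v)
  show ?case
  proof (cases v)
    case (Suc w)
    then have "(\<Sum>t=2..Suc v. A - (t - 1)) = (\<Sum>t=2..v. A - (t - 1)) + (A - v)"
      by (simp add: sum.cl_ivl_Suc)
    then show ?thesis using Suc.hyps Suc.prems \<open>v = Suc w\<close> by (simp add: algebra_simps)
  qed simp
qed simp

lemma sum_decreasing_closed_form:
  assumes "1 \<le> v" "v - 1 \<le> A"
  shows "A * B + (\<Sum>t=2..v. A - (t - 1)) = A * (B + v - 1) - tri (v - 1)"
    and "tri (v - 1) \<le> A * (B + v - 1)"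
proof -
  have "(\<Sum>t=2..v. A - (t - 1)) + tri (v - 1) = A * (v - 1)"
    using sum_decreasing_plus_tri[OF assms(2)] .
  moreover have "A * (B + v - 1) = A * B + A * (v - 1)"
    using assms(1) by (simp add: algebra_simps)
  ultimately show "A * B + (\<Sum>t=2..v. A - (t - 1)) = A * (B + v - 1) - tri (v - 1)"
    and "tri (v - 1) \<le> A * (B + v - 1)" by linarith+
qed

lemma tri_pred_eq: "tri (v - 1) = v * (v - 1) div 2"
  by (cases v) (simp_all add: tri_eq mult.commute)

lemma int_sum_decreasing_closed_form:
  assumes "1 \<le> v" "v - 1 \<le> A"
  shows "int (A * B + (\<Sum>t=2..v. A - (t - 1))) = int A * int (B + v - 1) - int (v * (v - 1) div 2)"
  using sum_decreasing_closed_form[OF assms, of B] tri_pred_eq[of v] by (simp add: of_nat_diff)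

lemma tri_convex:
  assumes "i \<le> m" "i \<le> S - m" "m \<le> S"
  shows "tri m + tri (S - m) \<le> tri i + tri (S - i)"
proof -
  obtain u where u: "m = i + u" using assms le_Suc_ex by blast
  obtain w where w: "S - m = i + w" using assms le_Suc_ex by blast
  have "S - i = (i + w) + u" using u w assms by simp
  then show ?thesis using u w tri_add[of i u] tri_add[of "i + w" u] by (simp add: algebra_simps)
qed

text \<open>The lattice points below the staircase whose outer corners are the antidiagonal points
  (d - b, b), b \<in> B.\<close>

definition staircase_below :: "nat \<Rightarrow> nat set \<Rightarrow> (nat \<times> nat) set" where
  "staircase_below d B = {(k, m). \<exists>b\<in>B. k + b \<le> d \<and> m \<le> b}"

lemma finite_staircase_below: "finite (staircase_below d B)"
  by (rule finite_subset[of _ "{..d} \<times> {..d}"]) (auto simp: staircase_below_def)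

lemma card_staircase_below_singleton:
  "m \<le> d \<Longrightarrow> card (staircase_below d {m}) = (d - m + 1) * (m + 1)"
proof -
  assume "m \<le> d"
  then have "staircase_below d {m} = {..d - m} \<times> {..m}" unfolding staircase_below_def by auto
  then show ?thesis by (simp add: card_cartesian_product)
qed

lemma tri_staircase_below_singleton:
  assumes "m \<le> d"
  shows "tri (d + 1) = card (staircase_below d {m}) + tri m + tri (d - m)"
proof -
  obtain e where e: "d = m + e" using assms le_Suc_ex by blast
  have "tri (d + 1) = tri (m + 1) + tri e + (m + 1) * e" unfolding e using tri_add[of "m + 1" e] by simp
  then show ?thesis using card_staircase_below_singleton[OF assms] unfolding e by (simp add: algebra_simps)
qed

lemma card_staircase_below_insert_min:
  assumes "finite B" "m < Min B" "Min B \<le> d"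
  shows "card (staircase_below d B) + (Min B - m) * (m + 1) \<le> card (staircase_below d (insert m B))"
proof -
  define R where "R = {d - Min B + 1 .. d - m} \<times> {..m}"
  have "card R = (Min B - m) * (m + 1)"
    unfolding R_def using assms by (simp add: card_cartesian_product)
  moreover have "R \<subseteq> staircase_below d (insert m B)"
    unfolding R_def staircase_below_def using assms by auto
  moreover have "R \<inter> staircase_below d B = {}"
  proof -
    have False if "d - Min B + 1 \<le> k" "b \<in> B" "k + b \<le> d" for k b
      using that Min_le[OF \<open>finite B\<close> \<open>b \<in> B\<close>] \<open>Min B \<le> d\<close> by linarith
    then show ?thesis unfolding R_def staircase_below_def by fastforce
  qed
  moreover have "staircase_below d B \<subseteq> staircase_below d (insert m B)"
    unfolding staircase_below_def by auto
  moreover have "card (staircase_below d B \<union> R) = card (staircase_below d B) + card R"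
    using \<open>R \<inter> staircase_below d B = {}\<close>
    by (intro card_Un_disjoint) (auto simp: finite_staircase_below R_def)
  ultimately show ?thesis
    using card_mono[OF finite_staircase_below, of "staircase_below d B \<union> R" d "insert m B"] by simp
qed

text \<open>The arithmetic of removing the lowest corner m < m' from a staircase with c = c' + 1 corners.\<close>

lemma tri_staircase_step:
  assumes "tri (d + 1) \<le> C' + tri m' + tri (d + 1 - c' - m')"
    and "C' + (m' - m) * (m + 1) \<le> C" and "m < m'" and "c' + m' \<le> d + 1" and "c = Suc c'"
  shows "tri (d + 1) \<le> C + tri m + tri (d + 1 - c - m)"
proof -
  obtain g where g: "m' = m + Suc g" using \<open>m < m'\<close> less_iff_Suc_add by auto
  obtain e where e: "d + 1 = c' + m' + e" using \<open>c' + m' \<le> d + 1\<close> le_Suc_ex by blast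
  have "d + 1 - c' - m' = e" "d + 1 - c - m = e + g" using e g \<open>c = Suc c'\<close> by simp_all
  moreover have "(m' - m) * (m + 1) = Suc g + m * Suc g" using g by (simp add: algebra_simps)
  moreover have "tri m' = tri m + tri g + Suc g + m * Suc g" using g tri_add[of m "Suc g"] by simp
  ultimately show ?thesis using assms(1,2) tri_add[of e g] by simp
qed

lemma tri_le_card_staircase_below:
  assumes "finite B" "B \<noteq> {}" "\<forall>b\<in>B. b \<le> d"
  shows "tri (d + 1) \<le> card (staircase_below d B) + tri (Min B) + tri (d + 1 - card B - Min B)"
  using assms
proof (induct "card B" arbitrary: B rule: less_induct)
  case (less B)
  define m where "m = Min B"
  have m: "m \<in> B" "\<forall>b\<in>B. m \<le> b" "m \<le> d"
    using less(2,3,4) by (simp_all add: m_def)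
  show ?case
  proof (cases "B = {m}")
    case True
    then show ?thesis using tri_staircase_below_singleton[OF m(3)] by simp
  next
    case False
    define B' where "B' = B - {m}"
    have B': "finite B'" "B' \<noteq> {}" "\<forall>b\<in>B'. b \<le> d" "B = insert m B'"
      using False m(1) less(2,4) unfolding B'_def by auto
    have "card B = Suc (card B')" using card_Suc_Diff1[OF less(2) m(1)] unfolding B'_def by simp
    have "Min B' \<in> B'" "\<forall>b\<in>B'. Min B' \<le> b" using B'(1,2) by simp_all
    then have "m \<le> Min B'" "Min B' \<noteq> m" "Min B' \<le> d" using m(2) B'(3) unfolding B'_def by auto
    then have "m < Min B'" by simp
    have "card B' \<le> card {Min B'..d}"
      using \<open>\<forall>b\<in>B'. Min B' \<le> b\<close> B'(3) by (intro card_mono) auto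
    then have "card B' + Min B' \<le> d + 1" using \<open>Min B' \<le> d\<close> by simp
    show ?thesis unfolding m_def[symmetric]
    proof (rule tri_staircase_step)
      show "tri (d + 1) \<le> card (staircase_below d B') + tri (Min B') + tri (d + 1 - card B' - Min B')"
        by (rule less(1)[OF _ B'(1,2,3)]) (simp add: \<open>card B = Suc (card B')\<close>)
      show "card (staircase_below d B') + (Min B' - m) * (m + 1) \<le> card (staircase_below d B)"
        using card_staircase_below_insert_min[OF B'(1) \<open>m < Min B'\<close> \<open>Min B' \<le> d\<close>]
        unfolding B'(4)[symmetric] .
    qed fact+
  qed
qed

lemma card_staircase_below_ge:
  assumes "B \<subseteq> {i..j}" "card B = v" "1 \<le> v"
  shows "(i + v) * (j + 1) - tri (v - 1) \<le> card (staircase_below (i + j) B)"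
proof -
  have B: "finite B" "B \<noteq> {}" using assms finite_subset by auto
  define m where "m = Min B"
  have "m \<in> B" unfolding m_def using B by simp
  then have m: "B \<subseteq> {m..j}" "i \<le> m" "m \<le> j"
    using assms Min_le[OF B(1)] unfolding m_def by auto
  have "v \<le> j + 1 - m" using card_mono[OF _ m(1)] assms by simp
  obtain w where w: "v = Suc w" using assms by (cases v) auto
  define k where "k = j - w"
  have j: "j = k + w" using \<open>v \<le> j + 1 - m\<close> w unfolding k_def by linarith
  have "tri (i + j + 1) \<le> card (staircase_below (i + j) B) + tri m + tri (i + j + 1 - v - m)"
    using tri_le_card_staircase_below[OF B, of "i + j"] assms unfolding m_def by fastforce
  moreover have "tri m + tri (i + j + 1 - v - m) \<le> tri i + tri k"
    using tri_convex[of i m "i + j + 1 - v"] \<open>v \<le> j + 1 - m\<close> m unfolding j w by simp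
  moreover have "tri (i + j + 1) = tri i + tri (k + v) + i * (k + v)"
    using tri_add[of i "k + v"] unfolding j w by (simp add: add.assoc)
  moreover have "2 * tri w = w * w + w" by (induct w) (auto simp: algebra_simps)
  then have "v * v = 2 * tri w + v" "tri v = tri w + v" unfolding w by (simp_all add: algebra_simps)
  moreover have "(i + v) * (j + 1) = i * (k + v) + k * v + v * v" unfolding j w by (simp add: algebra_simps)
  moreover have "tri (v - 1) = tri w" using w by simp
  ultimately show ?thesis
    using tri_add[of k v] by linarith
qed

text \<open>The lattice points of [0,s)^2 above the staircase whose inner corners are the antidiagonal
  points (d - b, b), b \<in> B.\<close>

definition staircase_above :: "nat \<Rightarrow> nat \<Rightarrow> nat set \<Rightarrow> (nat \<times> nat) set" where
  "staircase_above s d B = {(k, m). k < s \<and> m < s \<and> (\<exists>b\<in>B. d \<le> k + b \<and> b \<le> m)}"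

lemma finite_staircase_above: "finite (staircase_above s d B)"
  by (rule finite_subset[of _ "{..<s} \<times> {..<s}"]) (auto simp: staircase_above_def)

text \<open>Reflection of [0,s)^2 in its centre exchanges the two kinds of staircases.\<close>

lemma card_staircase_below_reflect_le:
  assumes B: "B \<subseteq> {i..j}" and "j < s"
  defines "B' \<equiv> (\<lambda>b. s - 1 - b) ` B"
  shows "card (staircase_below (s - 1 - j + (s - 1 - i)) B') \<le> card (staircase_above s (i + j) B)"
proof (rule card_inj_on_le[OF _ _ finite_staircase_above])
  let ?f = "\<lambda>(k, m). (s - 1 - k, s - 1 - m)"
  have bound: "fst x < s \<and> snd x < s" if x: "x \<in> staircase_below (s - 1 - j + (s - 1 - i)) B'" for x
  proof -
    obtain k m b where "x = (k, m)" "b \<in> B'" "k + b \<le> s - 1 - j + (s - 1 - i)" "m \<le> b"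
      using x by (cases x) (auto simp: staircase_below_def)
    moreover have "s - 1 - j \<le> b" "b \<le> s - 1 - i" using B \<open>b \<in> B'\<close> by (auto simp: B'_def subset_iff)
    ultimately show ?thesis using \<open>j < s\<close> by auto
  qed
  show "inj_on ?f (staircase_below (s - 1 - j + (s - 1 - i)) B')"
  proof (rule inj_onI)
    fix p q assume "p \<in> staircase_below (s - 1 - j + (s - 1 - i)) B'"
      "q \<in> staircase_below (s - 1 - j + (s - 1 - i)) B'" "?f p = ?f q"
    then show "p = q" using bound[of p] bound[of q] by (cases p, cases q) auto
  qed
  show "?f ` staircase_below (s - 1 - j + (s - 1 - i)) B' \<subseteq> staircase_above s (i + j) B"
  proof clarify
    fix k m assume "(k, m) \<in> staircase_below (s - 1 - j + (s - 1 - i)) B'"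
    then obtain b where "b \<in> B" "k + (s - 1 - b) \<le> s - 1 - j + (s - 1 - i)" "m \<le> s - 1 - b"
      unfolding staircase_below_def B'_def by auto
    moreover have "i \<le> b" "b \<le> j" using \<open>b \<in> B\<close> B by auto
    ultimately show "(s - 1 - k, s - 1 - m) \<in> staircase_above s (i + j) B"
      using \<open>j < s\<close> unfolding staircase_above_def by (auto intro!: bexI[of _ b])
  qed
qed

lemma card_staircase_above_ge:
  assumes B: "B \<subseteq> {i..j}" and "card B = v" "1 \<le> v" "j < s" "i \<le> j"
  shows "(s - i) * (s - j + v - 1) - tri (v - 1) \<le> card (staircase_above s (i + j) B)"
proof -
  define B' where "B' = (\<lambda>b. s - 1 - b) ` B"
  have "inj_on (\<lambda>b. s - 1 - b) B"
  proof (rule inj_onI)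
    fix x y assume "x \<in> B" "y \<in> B" "s - 1 - x = s - 1 - y"
    moreover have "x < s" "y < s" using \<open>x \<in> B\<close> \<open>y \<in> B\<close> B \<open>j < s\<close> by auto
    ultimately show "x = y" by arith
  qed
  then have "card B' = v" unfolding B'_def using card_image assms by metis
  moreover have "B' \<subseteq> {s - 1 - j .. s - 1 - i}" unfolding B'_def using B by (auto simp: subset_iff)
  ultimately have "(s - 1 - j + v) * (s - 1 - i + 1) - tri (v - 1)
      \<le> card (staircase_below (s - 1 - j + (s - 1 - i)) B')"
    using card_staircase_below_ge assms(3) by blast
  also have "\<dots> \<le> card (staircase_above s (i + j) B)"
    unfolding B'_def by (rule card_staircase_below_reflect_le[OF B \<open>j < s\<close>])
  finally have "(s - 1 - j + v) * (s - 1 - i + 1) - tri (v - 1) \<le> card (staircase_above s (i + j) B)" .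
  moreover have "s - 1 - j + v = s - j + v - 1" "s - 1 - i + 1 = s - i" using assms by auto
  ultimately show ?thesis by (simp only: mult.commute)
qed

lemma staircase_above_add_corner:
  assumes "1 \<le> v" "v \<le> j - i"
  shows "staircase_above s (i + j) {j - v..j}
    \<subseteq> staircase_above s (i + j) {j + 1 - v..j} \<union> {i + v..<s} \<times> {j - v}"
proof (rule subsetI, rule ccontr)
  let ?S = "staircase_above s (i + j) {j + 1 - v..j}"
  fix p assume p: "p \<in> staircase_above s (i + j) {j - v..j}"
    and notin: "p \<notin> ?S \<union> {i + v..<s} \<times> {j - v}"
  obtain k m b where km: "p = (k, m)" "k < s" "m < s" "b \<in> {j - v..j}" "i + j \<le> k + b" "b \<le> m"
    using p unfolding staircase_above_def by auto
  consider "j + 1 - v \<le> b" | "b = j - v" "m = j - v" | "b = j - v" "j + 1 - v \<le> m"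
    using km(4,6) by fastforce
  then show False
  proof cases
    case 1
    then show ?thesis using km notin unfolding staircase_above_def by auto
  next
    case 2
    then show ?thesis using km assms notin by auto
  next
    case 3
    then have "i + j \<le> k + (j + 1 - v)" "j + 1 - v \<le> j" using km(5) assms by auto
    then show ?thesis using km 3 notin unfolding staircase_above_def by auto
  qed
qed

lemma card_staircase_above_interval_le:
  assumes "1 \<le> v" "v \<le> j - i + 1" "i \<le> j" "j < s"
  shows "card (staircase_above s (i + j) {j + 1 - v..j}) \<le> (s - i) * (s - j) + (\<Sum>t=2..v. (s - i) - (t - 1))"
  using assms
proof (induct v)
  case (Suc v)
  show ?case
  proof (cases "v = 0")
    case True
    have "staircase_above s (i + j) {j..j} = {i..<s} \<times> {j..<s}"
      unfolding staircase_above_def by auto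
    then show ?thesis using True by (simp add: card_cartesian_product)
  next
    case False
    have "card (staircase_above s (i + j) {j + 1 - Suc v..j})
        \<le> card (staircase_above s (i + j) {j + 1 - v..j}) + card ({i + v..<s} \<times> {j - v})"
      using staircase_above_add_corner[of v j i s] False Suc.prems
      by (intro order_trans[OF card_mono card_Un_le]) (auto simp: finite_staircase_above)
    also have "\<dots> \<le> (s - i) * (s - j) + (\<Sum>t=2..v. (s - i) - (t - 1)) + (s - i - v)"
      using Suc False by (simp add: card_cartesian_product)
    also have "\<dots> = (s - i) * (s - j) + (\<Sum>t=2..Suc v. (s - i) - (t - 1))"
      using False by (simp add: sum.cl_ivl_Suc)
    finally show ?thesis .
  qed
qed simp

definition deglex_rank :: "nat \<times> nat \<Rightarrow> nat" where
  "deglex_rank N = tri (fst N + snd N) + snd N"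

lemma deglex_rank_less_if_degree_less:
  assumes "fst N + snd N < fst M + snd M"
  shows "deglex_rank N < deglex_rank M"
proof -
  have "deglex_rank N < tri (Suc (fst N + snd N))" unfolding deglex_rank_def by simp
  also have "\<dots> \<le> tri (fst M + snd M)" using assms by (intro tri_mono) simp
  also have "\<dots> \<le> deglex_rank M" unfolding deglex_rank_def by simp
  finally show ?thesis .
qed

lemma deglex_less_iff_rank: "deglex_less N M \<longleftrightarrow> deglex_rank N < deglex_rank M"
proof
  assume "deglex_less N M"
  then consider "fst N + snd N < fst M + snd M" | "fst N + snd N = fst M + snd M" "snd N < snd M"
    unfolding deglex_less_def by auto
  then show "deglex_rank N < deglex_rank M"
  proof cases
    case 1
    then show ?thesis by (rule deglex_rank_less_if_degree_less)
  qed (simp add: deglex_rank_def)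
next
  assume less: "deglex_rank N < deglex_rank M"
  consider "fst N + snd N < fst M + snd M" | "fst N + snd N = fst M + snd M"
    | "fst M + snd M < fst N + snd N" by linarith
  then show "deglex_less N M"
  proof cases
    case 2
    then show ?thesis using less unfolding deglex_less_def deglex_rank_def by auto
  next
    case 3
    then show ?thesis using less deglex_rank_less_if_degree_less[of M N] by auto
  qed (auto simp: deglex_less_def)
qed

lemma inj_deglex_rank: "inj deglex_rank"
proof (rule injI)
  fix N M assume eq: "deglex_rank N = deglex_rank M"
  then have "fst N + snd N = fst M + snd M"
    using deglex_rank_less_if_degree_less[of N M] deglex_rank_less_if_degree_less[of M N]
    by (metis less_irrefl linorder_neqE_nat)
  then show "N = M" using eq unfolding deglex_rank_def by (simp add: prod_eq_iff)
qed

lemma deglex_le_iff_rank: "deglex_le N M \<longleftrightarrow> deglex_rank N \<le> deglex_rank M"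
  unfolding deglex_le_def deglex_less_iff_rank
  using injD[OF inj_deglex_rank, of N M] by (auto simp: order.order_iff_strict)

lemma deglex_rank_antidiagonal: "b \<le> d \<Longrightarrow> deglex_rank (d - b, b) = tri d + b"
  unfolding deglex_rank_def by simp

lemma deglex_rank_mono:
  assumes "a' \<le> a" "b' \<le> b"
  shows "deglex_rank (a', b') \<le> deglex_rank (a, b)"
proof (cases "a' + b' < a + b")
  case False
  then have "a' = a" "b' = b" using assms by auto
  then show ?thesis by simp
qed (use deglex_rank_less_if_degree_less[of "(a', b')" "(a, b)"] in auto)

lemma deglex_rank_Suc_fst:
  "deglex_rank (Suc a, b) < deglex_rank (Suc a', b') \<longleftrightarrow> deglex_rank (a, b) < deglex_rank (a', b')"
  unfolding deglex_less_iff_rank[symmetric] deglex_less_def by auto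

lemma deglex_rank_Suc_snd:
  "deglex_rank (a, Suc b) < deglex_rank (a', Suc b') \<longleftrightarrow> deglex_rank (a, b) < deglex_rank (a', b')"
  unfolding deglex_less_iff_rank[symmetric] deglex_less_def by auto

lemma up_closed_mem:
  assumes up_fst: "\<And>a b. (a, b) \<in> D \<Longrightarrow> Suc a < s \<Longrightarrow> (Suc a, b) \<in> D"
    and up_snd: "\<And>a b. (a, b) \<in> D \<Longrightarrow> Suc b < s \<Longrightarrow> (a, Suc b) \<in> D"
    and "(a, b) \<in> D" "a \<le> k" "k < s" "b \<le> m" "m < s"
  shows "(k, m) \<in> D"
proof -
  have kb: "(k, b) \<in> D" using \<open>a \<le> k\<close> \<open>k < s\<close>
    by (induct k rule: dec_induct) (use \<open>(a, b) \<in> D\<close> up_fst in auto)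
  show ?thesis using \<open>b \<le> m\<close> \<open>m < s\<close>
    by (induct m rule: dec_induct) (use kb up_snd in auto)
qed

lemma down_closed_mem:
  assumes down_fst: "\<And>a b. (Suc a, b) \<in> D \<Longrightarrow> (a, b) \<in> D"
    and down_snd: "\<And>a b. (a, Suc b) \<in> D \<Longrightarrow> (a, b) \<in> D"
    and "(a, b) \<in> D" "k \<le> a" "m \<le> b"
  shows "(k, m) \<in> D"
proof -
  have kb: "(k, b) \<in> D" using \<open>k \<le> a\<close>
    by (induct k rule: inc_induct) (use \<open>(a, b) \<in> D\<close> down_fst in auto)
  show ?thesis using \<open>m \<le> b\<close>
    by (induct m rule: inc_induct) (use kb down_snd in auto)
qed

definition grid_prod :: "('a \<times> 'a) set \<Rightarrow> ('a \<Rightarrow> 'a::field) \<Rightarrow> ('a \<Rightarrow> 'a) \<Rightarrow> ('a \<times> 'a \<Rightarrow> 'a)" where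
  "grid_prod P f g = (\<lambda>p. if p \<in> P then f (fst p) * g (snd p) else 0)"

lemma grid_prod_in_span:
  assumes "f \<in> VS.span A" "g \<in> VS.span B"
  shows "grid_prod P f g \<in> VS.span ((\<lambda>(f, g). grid_prod P f g) ` (A \<times> B))"
proof -
  let ?G = "VS.span ((\<lambda>(f, g). grid_prod P f g) ` (A \<times> B))"
  have lin1: "Vector_Spaces.linear vscale vscale (\<lambda>f. grid_prod P f g)" for g
    by (rule linear_vscaleI) (auto simp: grid_prod_def vscale_def fun_eq_iff algebra_simps)
  have lin2: "Vector_Spaces.linear vscale vscale (grid_prod P f)" for f
    by (rule linear_vscaleI) (auto simp: grid_prod_def vscale_def fun_eq_iff algebra_simps)
  have "grid_prod P f' g \<in> ?G" if "f' \<in> A" for f'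
    by (rule linear_image_in_span[OF lin2 _ assms(2)]) (use that in \<open>auto intro: VS.span_base\<close>)
  then show ?thesis
    by (intro linear_image_in_span[OF lin1 _ assms(1)]) auto
qed

lemma finite_Delta: "finite (Delta s)"
  unfolding Delta_def by simp

locale grid =
  fixes S1 S2 :: "'a::field set" and s :: nat and xs ys :: "nat \<Rightarrow> 'a"
  assumes bij_xs: "bij_betw xs {..<s} S1" and bij_ys: "bij_betw ys {..<s} S2"
begin

definition "P = S1 \<times> S2"

lemma inj_xs: "inj_on xs {..<s}" and inj_ys: "inj_on ys {..<s}"
  using bij_xs bij_ys bij_betw_def by blast+

definition "ix = the_inv_into {..<s} xs"
definition "iy = the_inv_into {..<s} ys"

lemma ix_xs: "k < s \<Longrightarrow> ix (xs k) = k" and iy_ys: "k < s \<Longrightarrow> iy (ys k) = k"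
  unfolding ix_def iy_def using inj_xs inj_ys by (simp_all add: the_inv_into_f_f)

lemma ix_inverse: "x \<in> S1 \<Longrightarrow> ix x < s \<and> xs (ix x) = x"
  and iy_inverse: "y \<in> S2 \<Longrightarrow> iy y < s \<and> ys (iy y) = y"
  unfolding ix_def iy_def using bij_xs bij_ys
  by (metis bij_betwE bij_betw_imp_inj_on bij_betw_imp_surj_on f_the_inv_into_f lessThan_iff
      the_inv_into_into subset_refl)+

lemma sum_S1: "(\<Sum>x\<in>S1. f x) = (\<Sum>k<s. f (xs k))"
  and sum_S2: "(\<Sum>y\<in>S2. g y) = (\<Sum>k<s. g (ys k))"
  using sum.reindex_bij_betw[OF bij_xs, of f] sum.reindex_bij_betw[OF bij_ys, of g] by simp_all

definition newton_vec :: "nat \<times> nat \<Rightarrow> ('a \<times> 'a \<Rightarrow> 'a)" where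
  "newton_vec N = grid_prod P (newton xs (fst N)) (newton ys (snd N))"

definition dual_vec :: "nat \<times> nat \<Rightarrow> ('a \<times> 'a \<Rightarrow> 'a)" where
  "dual_vec N = grid_prod P (\<lambda>x. newton_dual xs (fst N) (ix x)) (\<lambda>y. newton_dual ys (snd N) (iy y))"

lemma dotp_newton_vec_dual_vec:
  assumes "N \<in> Delta s"
  shows "dotp P (newton_vec M) (dual_vec N) = (if M = N then 1 else 0)"
proof -
  have "dotp P (newton_vec M) (dual_vec N)
      = (\<Sum>x\<in>S1. newton xs (fst M) x * newton_dual xs (fst N) (ix x))
      * (\<Sum>y\<in>S2. newton ys (snd M) y * newton_dual ys (snd N) (iy y))"
    unfolding dotp_def newton_vec_def dual_vec_def grid_prod_def P_def sum_product sum.cartesian_product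
    by (intro sum.cong) (auto simp: algebra_simps)
  also have "\<dots> = (\<Sum>k<s. newton xs (fst M) (xs k) * newton_dual xs (fst N) k)
      * (\<Sum>k<s. newton ys (snd M) (ys k) * newton_dual ys (snd N) k)"
    unfolding sum_S1 sum_S2 by (simp add: ix_xs iy_ys)
  also have "\<dots> = (if M = N then 1 else 0)"
    using assms sum_newton_newton_dual[OF inj_xs] sum_newton_newton_dual[OF inj_ys]
    by (auto simp: Delta_def prod_eq_iff)
  finally show ?thesis .
qed

lemma biorth_newton_vec: "biorth P newton_vec dual_vec (Delta s)"
  and biorth_dual_vec: "biorth P dual_vec newton_vec (Delta s)"
  unfolding biorth_def using dotp_newton_vec_dual_vec by (auto simp: dotp_commute)

lemma newton_vec_eq_0: "s \<le> a \<or> s \<le> b \<Longrightarrow> newton_vec (a, b) = 0"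
  using ix_inverse iy_inverse newton_eq_0[of _ a xs] newton_eq_0[of _ b ys]
  unfolding newton_vec_def grid_prod_def P_def
  by (fastforce simp: fun_eq_iff dest!: order.strict_trans2[of _ s])

definition mul_fst :: "('a \<times> 'a \<Rightarrow> 'a) \<Rightarrow> ('a \<times> 'a \<Rightarrow> 'a)" where
  "mul_fst F = (\<lambda>p. fst p * F p)"

definition mul_snd :: "('a \<times> 'a \<Rightarrow> 'a) \<Rightarrow> ('a \<times> 'a \<Rightarrow> 'a)" where
  "mul_snd F = (\<lambda>p. snd p * F p)"

lemma mul_fst_newton_vec: "mul_fst (newton_vec (a, b)) = newton_vec (Suc a, b) + vscale (xs a) (newton_vec (a, b))"
  and mul_snd_newton_vec: "mul_snd (newton_vec (a, b)) = newton_vec (a, Suc b) + vscale (ys b) (newton_vec (a, b))"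
  unfolding mul_fst_def mul_snd_def newton_vec_def grid_prod_def vscale_def
  by (auto simp: fun_eq_iff newton_Suc algebra_simps)

lemma mul_fst_dual_vec:
  assumes "a < s"
  shows "mul_fst (dual_vec (a, b))
    = (if a = 0 then 0 else dual_vec (a - 1, b)) + vscale (xs a) (dual_vec (a, b))"
proof (rule ext)
  fix p
  let ?A = "\<lambda>a. newton_dual xs a (ix (fst p))" and ?B = "newton_dual ys b (iy (snd p))"
  show "mul_fst (dual_vec (a, b)) p = ((if a = 0 then 0 else dual_vec (a - 1, b)) + vscale (xs a) (dual_vec (a, b))) p"
  proof (cases "p \<in> P")
    case True
    then have "fst p * ?A a = (if a = 0 then 0 else ?A (a - 1)) + xs a * ?A a"
      using times_newton_dual[OF inj_xs assms, of "ix (fst p)"] ix_inverse[of "fst p"] by (auto simp: P_def)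
    then have "fst p * (?A a * ?B) = ((if a = 0 then 0 else ?A (a - 1)) + xs a * ?A a) * ?B"
      by (metis mult.assoc)
    then have "fst p * (?A a * ?B) = (if a = 0 then 0 else ?A (a - 1) * ?B) + xs a * (?A a * ?B)"
      by (cases "a = 0") (simp_all add: algebra_simps)
    then show ?thesis using True by (simp add: mul_fst_def dual_vec_def grid_prod_def vscale_def)
  qed (simp add: mul_fst_def dual_vec_def grid_prod_def vscale_def)
qed

lemma mul_snd_dual_vec:
  assumes "b < s"
  shows "mul_snd (dual_vec (a, b))
    = (if b = 0 then 0 else dual_vec (a, b - 1)) + vscale (ys b) (dual_vec (a, b))"
proof (rule ext)
  fix p
  let ?A = "newton_dual xs a (ix (fst p))" and ?B = "\<lambda>b. newton_dual ys b (iy (snd p))"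
  show "mul_snd (dual_vec (a, b)) p = ((if b = 0 then 0 else dual_vec (a, b - 1)) + vscale (ys b) (dual_vec (a, b))) p"
  proof (cases "p \<in> P")
    case True
    then have "snd p * ?B b = (if b = 0 then 0 else ?B (b - 1)) + ys b * ?B b"
      using times_newton_dual[OF inj_ys assms, of "iy (snd p)"] iy_inverse[of "snd p"] by (auto simp: P_def)
    then have "snd p * (?A * ?B b) = ?A * ((if b = 0 then 0 else ?B (b - 1)) + ys b * ?B b)"
      by (metis mult.left_commute)
    then have "snd p * (?A * ?B b) = (if b = 0 then 0 else ?A * ?B (b - 1)) + ys b * (?A * ?B b)"
      by (cases "b = 0") (simp_all add: algebra_simps)
    then show ?thesis using True by (simp add: mul_snd_def dual_vec_def grid_prod_def vscale_def)
  qed (simp add: mul_snd_def dual_vec_def grid_prod_def vscale_def)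
qed

lemma dotp_mul_fst: "dotp P (mul_fst F) G = dotp P F (mul_fst G)"
  and dotp_mul_snd: "dotp P (mul_snd F) G = dotp P F (mul_snd G)"
  unfolding mul_fst_def mul_snd_def by (simp_all add: dotp_mult_move)

lemma evcode_eq_span_newton_vec:
  assumes "\<And>a b a' b'. (a, b) \<in> L \<Longrightarrow> a' \<le> a \<Longrightarrow> b' \<le> b \<Longrightarrow> (a', b') \<in> L"
  shows "evcode P L = VS.span (newton_vec ` L)"
  unfolding evcode_def
proof (rule VS.span_eq[THEN iffD2], intro conjI subsetI)
  fix F assume "F \<in> evvec P ` L"
  then obtain a b where ab: "(a, b) \<in> L" "F = grid_prod P (\<lambda>x. x ^ a) (\<lambda>y. y ^ b)"
    unfolding evvec_def grid_prod_def by fastforce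
  then have "F \<in> VS.span ((\<lambda>(f, g). grid_prod P f g) ` (newton xs ` {..a} \<times> newton ys ` {..b}))"
    by (simp add: grid_prod_in_span power_in_span_newton)
  also have "\<dots> \<subseteq> VS.span (newton_vec ` L)"
    using assms ab(1) by (intro VS.span_mono) (force simp: newton_vec_def)
  finally show "F \<in> VS.span (newton_vec ` L)" .
next
  fix F assume "F \<in> newton_vec ` L"
  then obtain a b where ab: "(a, b) \<in> L" "F = grid_prod P (newton xs a) (newton ys b)"
    by (auto simp: newton_vec_def)
  then have "F \<in> VS.span ((\<lambda>(f, g). grid_prod P f g) ` ((\<lambda>a x. x ^ a) ` {..a} \<times> (\<lambda>b y. y ^ b) ` {..b}))"
    by (simp add: grid_prod_in_span newton_in_span_powers)
  also have "\<dots> \<subseteq> VS.span (evvec P ` L)"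
    using assms ab(1) by (intro VS.span_mono) (force simp: evvec_def grid_prod_def)
  finally show "F \<in> VS.span (evvec P ` L)" .
qed

lemma dotp_mul_fst_dual_vec:
  assumes "a < s"
  shows "dotp P (mul_fst F) (dual_vec (a, b))
    = (if a = 0 then 0 else dotp P F (dual_vec (a - 1, b))) + xs a * dotp P F (dual_vec (a, b))"
  unfolding dotp_mul_fst mul_fst_dual_vec[OF assms]
  by (cases "a = 0") (simp_all add: dotp_commute[of P F] dotp_add_left dotp_scale_left)

lemma dotp_mul_snd_dual_vec:
  assumes "b < s"
  shows "dotp P (mul_snd F) (dual_vec (a, b))
    = (if b = 0 then 0 else dotp P F (dual_vec (a, b - 1))) + ys b * dotp P F (dual_vec (a, b))"
  unfolding dotp_mul_snd mul_snd_dual_vec[OF assms]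
  by (cases "b = 0") (simp_all add: dotp_commute[of P F] dotp_add_left dotp_scale_left)

lemma dotp_mul_fst_newton_vec:
  "dotp P (mul_fst W) (newton_vec (a, b)) = dotp P W (newton_vec (Suc a, b)) + xs a * dotp P W (newton_vec (a, b))"
  unfolding dotp_mul_fst mul_fst_newton_vec
  by (simp add: dotp_commute[of P W] dotp_add_left dotp_scale_left)

lemma dotp_mul_snd_newton_vec:
  "dotp P (mul_snd W) (newton_vec (a, b)) = dotp P W (newton_vec (a, Suc b)) + ys b * dotp P W (newton_vec (a, b))"
  unfolding dotp_mul_snd mul_snd_newton_vec
  by (simp add: dotp_commute[of P W] dotp_add_left dotp_scale_left)

text \<open>The top index of F is the deglex-largest N at which F has a nonzero coordinate
  dotp P F (dual_vec N), i.e. its leading index for the reversed rank.\<close>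

definition top_rank :: "nat \<times> nat \<Rightarrow> nat" where
  "top_rank N = deglex_rank (s, s) - deglex_rank N"

abbreviation top_index :: "('a \<times> 'a \<Rightarrow> 'a) \<Rightarrow> nat \<times> nat \<Rightarrow> bool" where
  "top_index F N \<equiv> lead_index P dual_vec (Delta s) top_rank F N"

abbreviation bottom_index :: "('a \<times> 'a \<Rightarrow> 'a) \<Rightarrow> nat \<times> nat \<Rightarrow> bool" where
  "bottom_index W N \<equiv> lead_index P newton_vec (Delta s) deglex_rank W N"

lemma deglex_rank_less_Delta: "N \<in> Delta s \<Longrightarrow> deglex_rank N < deglex_rank (s, s)"
  unfolding Delta_def by (intro deglex_rank_less_if_degree_less) auto

lemma inj_on_top_rank: "inj_on top_rank (Delta s)"
  using deglex_rank_less_Delta injD[OF inj_deglex_rank]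
  unfolding top_rank_def by (intro inj_onI) (metis diff_diff_cancel less_imp_le)

lemma top_index_iff: "top_index F N \<longleftrightarrow> N \<in> Delta s \<and> dotp P F (dual_vec N) \<noteq> 0 \<and>
    (\<forall>N'\<in>Delta s. deglex_rank N < deglex_rank N' \<longrightarrow> dotp P F (dual_vec N') = 0)"
proof -
  have "top_rank N' < top_rank N \<longleftrightarrow> deglex_rank N < deglex_rank N'" if "N \<in> Delta s" "N' \<in> Delta s" for N'
    using that deglex_rank_less_Delta unfolding top_rank_def by fastforce
  then show ?thesis unfolding lead_index_def by blast
qed

lemma top_index_mul_fst:
  assumes "top_index F (a, b)" "Suc a < s"
  shows "top_index (mul_fst F) (Suc a, b)"
proof -
  have lead: "dotp P F (dual_vec (a, b)) \<noteq> 0" and "b < s"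
    and above: "\<And>N. N \<in> Delta s \<Longrightarrow> deglex_rank (a, b) < deglex_rank N \<Longrightarrow> dotp P F (dual_vec N) = 0"
    using assms(1) unfolding top_index_iff by (auto simp: Delta_def)
  have "dotp P (mul_fst F) (dual_vec (c, d)) = 0"
    if "(c, d) \<in> Delta s" "deglex_rank (Suc a, b) < deglex_rank (c, d)" for c d
  proof -
    have "deglex_rank (a, b) < deglex_rank (c, d)"
      using that(2) deglex_rank_less_if_degree_less[of "(a, b)" "(Suc a, b)"] by simp
    moreover have "dotp P F (dual_vec (c - 1, d)) = 0" if "c \<noteq> 0"
      using \<open>(c, d) \<in> Delta s\<close> \<open>deglex_rank (Suc a, b) < deglex_rank (c, d)\<close> that
        deglex_rank_Suc_fst[of a b "c - 1" d] above[of "(c - 1, d)"] by (auto simp: Delta_def)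
    ultimately show ?thesis
      using that(1) above[of "(c, d)"] by (auto simp: Delta_def dotp_mul_fst_dual_vec)
  qed
  moreover have "dotp P F (dual_vec (Suc a, b)) = 0"
    using above[of "(Suc a, b)"] assms(2) \<open>b < s\<close> deglex_rank_less_if_degree_less[of "(a, b)" "(Suc a, b)"]
    by (auto simp: Delta_def)
  then have "dotp P (mul_fst F) (dual_vec (Suc a, b)) \<noteq> 0"
    using lead by (simp add: dotp_mul_fst_dual_vec assms(2))
  ultimately show ?thesis using assms(2) \<open>b < s\<close> unfolding top_index_iff by (auto simp: Delta_def)
qed

lemma top_index_mul_snd:
  assumes "top_index F (a, b)" "Suc b < s"
  shows "top_index (mul_snd F) (a, Suc b)"
proof -
  have lead: "dotp P F (dual_vec (a, b)) \<noteq> 0" and "a < s"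
    and above: "\<And>N. N \<in> Delta s \<Longrightarrow> deglex_rank (a, b) < deglex_rank N \<Longrightarrow> dotp P F (dual_vec N) = 0"
    using assms(1) unfolding top_index_iff by (auto simp: Delta_def)
  have "dotp P (mul_snd F) (dual_vec (c, d)) = 0"
    if "(c, d) \<in> Delta s" "deglex_rank (a, Suc b) < deglex_rank (c, d)" for c d
  proof -
    have "deglex_rank (a, b) < deglex_rank (c, d)"
      using that(2) deglex_rank_less_if_degree_less[of "(a, b)" "(a, Suc b)"] by simp
    moreover have "dotp P F (dual_vec (c, d - 1)) = 0" if "d \<noteq> 0"
      using \<open>(c, d) \<in> Delta s\<close> \<open>deglex_rank (a, Suc b) < deglex_rank (c, d)\<close> that
        deglex_rank_Suc_snd[of a b c "d - 1"] above[of "(c, d - 1)"] by (auto simp: Delta_def)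
    ultimately show ?thesis
      using that(1) above[of "(c, d)"] by (auto simp: Delta_def dotp_mul_snd_dual_vec)
  qed
  moreover have "dotp P F (dual_vec (a, Suc b)) = 0"
    using above[of "(a, Suc b)"] assms(2) \<open>a < s\<close> deglex_rank_less_if_degree_less[of "(a, b)" "(a, Suc b)"]
    by (auto simp: Delta_def)
  then have "dotp P (mul_snd F) (dual_vec (a, Suc b)) \<noteq> 0"
    using lead by (simp add: dotp_mul_snd_dual_vec assms(2))
  ultimately show ?thesis using assms(2) \<open>a < s\<close> unfolding top_index_iff by (auto simp: Delta_def)
qed

lemma bottom_index_iff: "bottom_index W N \<longleftrightarrow> N \<in> Delta s \<and> dotp P W (newton_vec N) \<noteq> 0 \<and>
    (\<forall>N'\<in>Delta s. deglex_rank N' < deglex_rank N \<longrightarrow> dotp P W (newton_vec N') = 0)"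
  unfolding lead_index_def ..

text \<open>Outside Delta s the vectors newton_vec vanish, so no boundary condition is needed when
  multiplying down.\<close>

lemma bottom_index_mul_fst:
  assumes "bottom_index W (Suc a, b)"
  shows "bottom_index (mul_fst W) (a, b)"
proof -
  have lead: "dotp P W (newton_vec (Suc a, b)) \<noteq> 0" and "Suc a < s" "b < s"
    and below: "\<And>N. N \<in> Delta s \<Longrightarrow> deglex_rank N < deglex_rank (Suc a, b) \<Longrightarrow> dotp P W (newton_vec N) = 0"
    using assms unfolding bottom_index_iff by (auto simp: Delta_def)
  have shifted: "dotp P W (newton_vec (Suc c, d)) = 0" if "deglex_rank (c, d) < deglex_rank (a, b)" "d < s" for c d
    using below[of "(Suc c, d)"] newton_vec_eq_0[of "Suc c" d] that deglex_rank_Suc_fst[of c d a b]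
    by (cases "Suc c < s") (auto simp: Delta_def)
  have "dotp P W (newton_vec N) = 0" if "deglex_rank N < deglex_rank (Suc a, b)" "N \<in> Delta s" for N
    using below that by blast
  then show ?thesis
    using lead shifted \<open>Suc a < s\<close> \<open>b < s\<close> deglex_rank_less_if_degree_less[of "(a, b)" "(Suc a, b)"]
    unfolding bottom_index_iff
    by (auto simp: Delta_def dotp_mul_fst_newton_vec intro: less_trans)
qed

lemma bottom_index_mul_snd:
  assumes "bottom_index W (a, Suc b)"
  shows "bottom_index (mul_snd W) (a, b)"
proof -
  have lead: "dotp P W (newton_vec (a, Suc b)) \<noteq> 0" and "a < s" "Suc b < s"
    and below: "\<And>N. N \<in> Delta s \<Longrightarrow> deglex_rank N < deglex_rank (a, Suc b) \<Longrightarrow> dotp P W (newton_vec N) = 0"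
    using assms unfolding bottom_index_iff by (auto simp: Delta_def)
  have shifted: "dotp P W (newton_vec (c, Suc d)) = 0" if "deglex_rank (c, d) < deglex_rank (a, b)" "c < s" for c d
    using below[of "(c, Suc d)"] newton_vec_eq_0[of c "Suc d"] that deglex_rank_Suc_snd[of c d a b]
    by (cases "Suc d < s") (auto simp: Delta_def)
  have "dotp P W (newton_vec N) = 0" if "deglex_rank N < deglex_rank (a, Suc b)" "N \<in> Delta s" for N
    using below that by blast
  then show ?thesis
    using lead shifted \<open>a < s\<close> \<open>Suc b < s\<close> deglex_rank_less_if_degree_less[of "(a, b)" "(a, Suc b)"]
    unfolding bottom_index_iff
    by (auto simp: Delta_def dotp_mul_snd_newton_vec intro: less_trans)
qed

definition top_indices :: "('a \<times> 'a) set \<Rightarrow> (nat \<times> nat) set" where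
  "top_indices T = {N. \<exists>F. (\<forall>p. p \<notin> T \<longrightarrow> F p = 0) \<and> top_index F N}"

definition bottom_indices :: "('a \<times> 'a) set \<Rightarrow> (nat \<times> nat) set" where
  "bottom_indices T = {N. \<exists>W. (\<forall>p. p \<notin> T \<longrightarrow> W p = 0) \<and> bottom_index W N}"

lemma card_top_indices_le: "finite T \<Longrightarrow> card (top_indices T) \<le> card T"
  unfolding top_indices_def using card_lead_indices_supported_le[OF _ finite_Delta inj_on_top_rank] .

lemma card_bottom_indices_le: "finite T \<Longrightarrow> card (bottom_indices T) \<le> card T"
  unfolding bottom_indices_def
  using card_lead_indices_supported_le[OF _ finite_Delta inj_on_subset[OF inj_deglex_rank subset_UNIV]] .

lemma finite_top_indices: "finite (top_indices T)"
  and finite_bottom_indices: "finite (bottom_indices T)"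
  by (auto intro: finite_subset[OF _ finite_Delta] simp: top_indices_def bottom_indices_def lead_index_def)

lemma staircase_above_subset_top_indices:
  assumes "\<And>b. b \<in> B \<Longrightarrow> (d - b, b) \<in> top_indices T" "\<forall>b\<in>B. b \<le> d"
  shows "staircase_above s d B \<subseteq> top_indices T"
proof clarify
  fix k m assume "(k, m) \<in> staircase_above s d B"
  then obtain b where "b \<in> B" "d \<le> k + b" "b \<le> m" "k < s" "m < s"
    unfolding staircase_above_def by auto
  show "(k, m) \<in> top_indices T"
  proof (rule up_closed_mem[of "top_indices T"])
    fix a c assume "(a, c) \<in> top_indices T"
    then obtain F where F: "\<forall>p. p \<notin> T \<longrightarrow> F p = 0" "top_index F (a, c)" unfolding top_indices_def by blast
    then have "\<forall>p. p \<notin> T \<longrightarrow> mul_fst F p = 0" "\<forall>p. p \<notin> T \<longrightarrow> mul_snd F p = 0"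
      by (simp_all add: mul_fst_def mul_snd_def)
    then show "Suc a < s \<Longrightarrow> (Suc a, c) \<in> top_indices T" and "Suc c < s \<Longrightarrow> (a, Suc c) \<in> top_indices T"
      unfolding top_indices_def using top_index_mul_fst[OF F(2)] top_index_mul_snd[OF F(2)] by blast+
  qed (use assms \<open>b \<in> B\<close> \<open>d \<le> k + b\<close> \<open>b \<le> m\<close> \<open>k < s\<close> \<open>m < s\<close> in auto)
qed

lemma staircase_below_subset_bottom_indices:
  assumes "\<And>b. b \<in> B \<Longrightarrow> (d - b, b) \<in> bottom_indices T" "\<forall>b\<in>B. b \<le> d"
  shows "staircase_below d B \<subseteq> bottom_indices T"
proof clarify
  fix k m assume "(k, m) \<in> staircase_below d B"
  then obtain b where "b \<in> B" "k + b \<le> d" "m \<le> b"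
    unfolding staircase_below_def by auto
  show "(k, m) \<in> bottom_indices T"
  proof (rule down_closed_mem[of "bottom_indices T"])
    have supp: "\<forall>p. p \<notin> T \<longrightarrow> mul_fst W p = 0" "\<forall>p. p \<notin> T \<longrightarrow> mul_snd W p = 0"
      if "\<forall>p. p \<notin> T \<longrightarrow> W p = 0" for W
      using that by (simp_all add: mul_fst_def mul_snd_def)
    fix a c
    show "(Suc a, c) \<in> bottom_indices T \<Longrightarrow> (a, c) \<in> bottom_indices T"
      and "(a, Suc c) \<in> bottom_indices T \<Longrightarrow> (a, c) \<in> bottom_indices T"
      unfolding bottom_indices_def using supp bottom_index_mul_fst bottom_index_mul_snd by blast+
  qed (use assms \<open>b \<in> B\<close> \<open>k + b \<le> d\<close> \<open>m \<le> b\<close> in auto)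
qed

lemma dotp_dual_vec_eq_0_outside:
  assumes "F \<in> VS.span (newton_vec ` L)" "N \<in> Delta s" "N \<notin> L"
  shows "dotp P F (dual_vec N) = 0"
  using assms by (intro dotp_eq_0_on_span[OF assms(1)]) (auto simp: dotp_newton_vec_dual_vec)

lemma newton_vec_expansion:
  assumes "F \<in> VS.span (newton_vec ` L)" "L \<subseteq> Delta s"
  shows "F = (\<Sum>N\<in>L. vscale (dotp P F (dual_vec N)) (newton_vec N))"
  using biorth_expansion[OF biorth_subset[OF biorth_newton_vec assms(2)] _ assms(1)]
    finite_subset[OF assms(2) finite_Delta] by blast

lemma span_newton_vec_restrict:
  assumes "F \<in> VS.span (newton_vec ` L)" "L \<subseteq> Delta s" "L' \<subseteq> L"
    and "\<And>N. N \<in> L - L' \<Longrightarrow> dotp P F (dual_vec N) = 0"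
  shows "F \<in> VS.span (newton_vec ` L')"
proof -
  have "F = (\<Sum>N\<in>L. vscale (dotp P F (dual_vec N)) (newton_vec N))"
    by (rule newton_vec_expansion[OF assms(1,2)])
  also have "\<dots> = (\<Sum>N\<in>L'. vscale (dotp P F (dual_vec N)) (newton_vec N))"
    using assms(3,4) finite_subset[OF assms(2) finite_Delta]
    by (intro sum.mono_neutral_right) (auto simp: vscale_def zero_fun_def)
  also have "\<dots> \<in> VS.span (newton_vec ` L')"
    by (intro VS.span_sum VS.span_scale VS.span_base) auto
  finally show ?thesis .
qed

lemma span_newton_vec_eq_0:
  assumes "F \<in> VS.span (newton_vec ` L)" "L \<subseteq> Delta s" "\<And>N. N \<in> L \<Longrightarrow> dotp P F (dual_vec N) = 0"
  shows "F = 0"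
  using span_newton_vec_restrict[OF assms(1,2), of "{}"] assms(3) by simp

lemma dual_code_span_newton_vec_iff:
  "W \<in> dual_code P (VS.span (newton_vec ` L))
    \<longleftrightarrow> (\<forall>p. p \<notin> P \<longrightarrow> W p = 0) \<and> (\<forall>N\<in>L. dotp P W (newton_vec N) = 0)"
proof -
  have "(\<forall>c\<in>VS.span (newton_vec ` L). dotp P c W = 0) \<longleftrightarrow> (\<forall>N\<in>L. dotp P (newton_vec N) W = 0)"
    by (auto intro: VS.span_base dotp_eq_0_on_span)
  then show ?thesis unfolding dual_code_def dotp_def[symmetric] by (auto simp: dotp_commute)
qed

lemma newton_vec_nonzero_at:
  assumes "newton_vec (a, b) p \<noteq> 0"
  obtains k m where "p = (xs k, ys m)" "a \<le> k" "k < s" "b \<le> m" "m < s"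
proof -
  have "p \<in> P" using assms unfolding newton_vec_def grid_prod_def by (auto split: if_splits)
  then have "ix (fst p) < s" "iy (snd p) < s" "p = (xs (ix (fst p)), ys (iy (snd p)))"
    using ix_inverse iy_inverse unfolding P_def by (auto simp: prod_eq_iff)
  moreover have "a \<le> ix (fst p)" "b \<le> iy (snd p)"
    using assms calculation(3) newton_eq_0[of _ a xs] newton_eq_0[of _ b ys] \<open>p \<in> P\<close>
    unfolding newton_vec_def grid_prod_def by (metis fst_conv snd_conv mult_zero_left mult_zero_right not_le)+
  ultimately show ?thesis using that by blast
qed

end

lemma finite_RGHW_candidates:
  fixes C1 C2 :: "('b::finite \<Rightarrow> 'a::field) set"
  shows "finite {card (supp U) | U. U \<subseteq> C1 \<and> VS.subspace U \<and> VS.dim U = v \<and> U \<inter> C2 = {0}}"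
  by (rule finite_subset[of _ "{..card (UNIV :: 'b set)}"]) (auto intro: card_mono)

lemma RGHW_le_card_supp:
  fixes C1 C2 :: "('b::finite \<Rightarrow> 'a::field) set"
  assumes "U \<subseteq> C1" "VS.subspace U" "VS.dim U = v" "U \<inter> C2 = {0}"
  shows "RGHW v C1 C2 \<le> card (supp U)"
  unfolding RGHW_def using assms by (intro Min_le finite_RGHW_candidates) auto

lemma le_RGHW:
  fixes C1 C2 :: "('b::finite \<Rightarrow> 'a::field) set"
  assumes "\<And>U. U \<subseteq> C1 \<Longrightarrow> VS.subspace U \<Longrightarrow> VS.dim U = v \<Longrightarrow> U \<inter> C2 = {0} \<Longrightarrow> w \<le> card (supp U)"
    and "U \<subseteq> C1" "VS.subspace U" "VS.dim U = v" "U \<inter> C2 = {0}"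
  shows "w \<le> RGHW v C1 C2"
  unfolding RGHW_def using assms by (subst Min_ge_iff[OF finite_RGHW_candidates]) blast+

section \<open>Codes between two deglex staircases\<close>

locale grid_ij = grid S1 S2 s xs ys
  for S1 S2 :: "'a::{finite,field} set" and s xs ys +
  fixes i j :: nat
  assumes i_le_j: "i \<le> j" and j_less_s: "j < s"
begin

definition "L1 = {N \<in> Delta s. deglex_le N (i, j)}"
definition "L2 = {N \<in> Delta s. deglex_less N (j, i)}"
definition "C1 = VS.span (newton_vec ` L1)"
definition "C2 = VS.span (newton_vec ` L2)"
definition "antidiag = (\<lambda>b. (i + j - b, b)) ` {i..j}"

lemma L1_subset_Delta: "L1 \<subseteq> Delta s" and L2_subset_Delta: "L2 \<subseteq> Delta s"
  unfolding L1_def L2_def by auto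

lemma L1_rank: "L1 = {N \<in> Delta s. deglex_rank N \<le> deglex_rank (i, j)}"
  and L2_rank: "L2 = {N \<in> Delta s. deglex_rank N < deglex_rank (j, i)}"
  by (simp_all add: L1_def L2_def deglex_le_iff_rank deglex_less_iff_rank)

lemma L2_subset_L1: "L2 \<subseteq> L1"
  using deglex_rank_antidiagonal[of i "i + j"] deglex_rank_antidiagonal[of j "i + j"] i_le_j
  unfolding L1_rank L2_rank by (auto simp: add.commute)

lemma L1_down_closed: "(a, b) \<in> L1 \<Longrightarrow> a' \<le> a \<Longrightarrow> b' \<le> b \<Longrightarrow> (a', b') \<in> L1"
  and L2_down_closed: "(a, b) \<in> L2 \<Longrightarrow> a' \<le> a \<Longrightarrow> b' \<le> b \<Longrightarrow> (a', b') \<in> L2"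
  unfolding L1_rank L2_rank Delta_def using deglex_rank_mono[of a' a b' b] by auto

lemma L1_diff_L2: "L1 - L2 = antidiag"
proof
  have ij: "deglex_rank (i, j) = tri (i + j) + j" "deglex_rank (j, i) = tri (i + j) + i"
    using deglex_rank_antidiagonal[of j "i + j"] deglex_rank_antidiagonal[of i "i + j"] by (simp_all add: add.commute)
  show "antidiag \<subseteq> L1 - L2"
    using ij deglex_rank_antidiagonal[of _ "i + j"] j_less_s
    unfolding antidiag_def L1_rank L2_rank Delta_def by auto
  show "L1 - L2 \<subseteq> antidiag"
  proof clarify
    fix a b assume ab: "(a, b) \<in> L1" "(a, b) \<notin> L2"
    then have r: "deglex_rank (j, i) \<le> deglex_rank (a, b)" "deglex_rank (a, b) \<le> deglex_rank (i, j)"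
      unfolding L1_rank L2_rank by auto
    moreover have "\<not> a + b < j + i" "\<not> i + j < a + b"
      using deglex_rank_less_if_degree_less[of "(a, b)" "(j, i)"]
        deglex_rank_less_if_degree_less[of "(i, j)" "(a, b)"] r by auto
    ultimately have "a + b = i + j" by linarith
    moreover have "deglex_rank (a, b) = tri (i + j) + b"
      using \<open>a + b = i + j\<close> unfolding deglex_rank_def by simp
    ultimately show "(a, b) \<in> antidiag"
      using r ij unfolding antidiag_def by (auto intro!: image_eqI[of _ _ b])
  qed
qed

lemma card_antidiag: "card antidiag = j - i + 1"
proof -
  have "inj_on (\<lambda>b. (i + j - b, b)) {i..j}" by (rule inj_onI) auto
  then show ?thesis unfolding antidiag_def using card_image i_le_j by fastforce
qed

lemma evcode_L1: "evcode P L1 = C1"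
  unfolding C1_def by (rule evcode_eq_span_newton_vec[OF L1_down_closed])

lemma evcode_L2: "evcode P L2 = C2"
  unfolding C2_def by (rule evcode_eq_span_newton_vec[OF L2_down_closed])

lemma codim_C1_C2: "VS.dim C1 - VS.dim C2 = j - i + 1"
proof -
  have "VS.dim C1 = card L1" "VS.dim C2 = card L2"
    unfolding C1_def C2_def
    using biorth_dim_span[OF biorth_newton_vec finite_Delta] L1_subset_Delta L2_subset_Delta by auto
  moreover have "finite L1" "finite L2"
    using finite_subset[OF L1_subset_Delta finite_Delta] finite_subset[OF L2_subset_Delta finite_Delta] .
  then have "card L1 = card L2 + card antidiag"
    using L2_subset_L1 card_Diff_subset[of L2 L1] card_mono[of L1 L2] unfolding L1_diff_L2[symmetric]
    by simp
  ultimately show ?thesis using card_antidiag by simp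
qed

lemma C2_psubset_C1: "C2 \<subset> C1"
proof -
  have "C2 \<subseteq> C1" unfolding C1_def C2_def using L2_subset_L1 by (intro VS.span_mono) auto
  then show ?thesis using codim_C1_C2 by auto
qed

lemma finite_supp: "finite (supp (U :: ('a \<times> 'a \<Rightarrow> 'a) set))"
  by simp

lemma antidiag_subset_choice:
  assumes "M \<subseteq> antidiag" "v \<le> card M"
  obtains B where "B \<subseteq> {i..j}" "card B = v" "\<And>b. b \<in> B \<Longrightarrow> (i + j - b, b) \<in> M"
proof -
  obtain M' where M': "M' \<subseteq> M" "card M' = v" using obtain_subset_with_card_n[OF assms(2)] by blast
  have M'_eq: "N = (i + j - snd N, snd N)" "snd N \<in> {i..j}" if "N \<in> M'" for N
    using that M'(1) assms(1) unfolding antidiag_def by auto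
  have "inj_on snd M'" by (rule inj_onI) (metis M'_eq(1))
  show ?thesis
  proof (rule that)
    show "snd ` M' \<subseteq> {i..j}" using M'_eq(2) by blast
    show "card (snd ` M') = v" using \<open>inj_on snd M'\<close> M'(2) card_image by blast
    show "(i + j - b, b) \<in> M" if "b \<in> snd ` M'" for b
      using that M'(1) M'_eq(1) by force
  qed
qed

subsection \<open>The primary codes\<close>

lemma top_index_in_antidiag:
  assumes "U \<subseteq> C1" "U \<inter> C2 = {0}" "F \<in> U" "top_index F N"
  shows "N \<in> antidiag"
proof -
  have F: "F \<in> VS.span (newton_vec ` L1)" using assms(1,3) unfolding C1_def by blast
  have N: "N \<in> Delta s" "dotp P F (dual_vec N) \<noteq> 0" using assms(4) unfolding top_index_iff by auto
  have "N \<in> L1" using dotp_dual_vec_eq_0_outside[OF F N(1)] N(2) by blast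
  moreover have "N \<notin> L2"
  proof
    assume "N \<in> L2"
    have "F \<in> C2" unfolding C2_def
    proof (rule span_newton_vec_restrict[OF F L1_subset_Delta L2_subset_L1])
      fix N' assume "N' \<in> L1 - L2"
      then have "deglex_rank N < deglex_rank N'" "N' \<in> Delta s"
        using \<open>N \<in> L2\<close> unfolding L1_rank L2_rank by auto
      then show "dotp P F (dual_vec N') = 0" using assms(4) unfolding top_index_iff by blast
    qed
    then have "F = 0" using assms(2,3) by blast
    then show False using N(2) by simp
  qed
  ultimately show ?thesis using L1_diff_L2 by blast
qed

lemma card_supp_ge_primary:
  assumes "U \<subseteq> C1" "VS.subspace U" "VS.dim U = v" "U \<inter> C2 = {0}" "1 \<le> v"
  shows "(s - i) * (s - j + v - 1) - tri (v - 1) \<le> card (supp U)"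
proof -
  define M where "M = {N. \<exists>F\<in>U. top_index F N}"
  have "\<exists>N\<in>Delta s. dotp P F (dual_vec N) \<noteq> 0" if "F \<in> U" "F \<noteq> 0" for F
    using that assms(1) span_newton_vec_eq_0[of F L1] L1_subset_Delta unfolding C1_def by blast
  then have "v \<le> card M"
    using dim_le_card_lead_indices[OF finite_Delta assms(2)] assms(3) unfolding M_def by blast
  moreover have "M \<subseteq> antidiag" using top_index_in_antidiag assms unfolding M_def by blast
  ultimately obtain B where B: "B \<subseteq> {i..j}" "card B = v" "\<And>b. b \<in> B \<Longrightarrow> (i + j - b, b) \<in> M"
    using antidiag_subset_choice by blast
  have "M \<subseteq> top_indices (supp U)" unfolding M_def top_indices_def supp_def by blast
  then have "staircase_above s (i + j) B \<subseteq> top_indices (supp U)"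
    using B by (intro staircase_above_subset_top_indices) auto
  then have "card (staircase_above s (i + j) B) \<le> card (top_indices (supp U))"
    by (rule card_mono[OF finite_top_indices])
  also have "\<dots> \<le> card (supp U)" by (rule card_top_indices_le[OF finite_supp])
  finally show ?thesis using card_staircase_above_ge[OF B(1,2) assms(5) j_less_s i_le_j] by linarith
qed

text \<open>The subspaces attaining the bounds are spanned by the basis vectors at the v antidiagonal
  points next to (i, j).\<close>

definition "last_antidiag v = (\<lambda>b. (i + j - b, b)) ` {j + 1 - v..j}"

lemma last_antidiag_subset: "v \<le> j - i + 1 \<Longrightarrow> last_antidiag v \<subseteq> antidiag"
  unfolding last_antidiag_def antidiag_def using i_le_j by (intro image_mono) auto

lemma card_last_antidiag: "v \<le> j - i + 1 \<Longrightarrow> card (last_antidiag v) = v"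
proof -
  assume "v \<le> j - i + 1"
  have "inj_on (\<lambda>b. (i + j - b, b)) {j + 1 - v..j}" by (rule inj_onI) auto
  then show ?thesis unfolding last_antidiag_def using card_image \<open>v \<le> j - i + 1\<close> i_le_j by fastforce
qed

lemma last_antidiag_props:
  assumes "v \<le> j - i + 1"
  shows "last_antidiag v \<subseteq> L1" "last_antidiag v \<inter> L2 = {}" "last_antidiag v \<subseteq> Delta s"
  using last_antidiag_subset[OF assms] L1_diff_L2 L1_subset_Delta by blast+

lemma supp_span_last_antidiag:
  assumes "1 \<le> v" "v \<le> j - i + 1"
  shows "card (supp (VS.span (newton_vec ` last_antidiag v)))
    \<le> (s - i) * (s - j) + (\<Sum>t=2..v. (s - i) - (t - 1))"
proof -
  let ?Q = "staircase_above s (i + j) {j + 1 - v..j}"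
  have "supp (VS.span (newton_vec ` last_antidiag v)) \<subseteq> (\<lambda>(k, m). (xs k, ys m)) ` ?Q"
  proof
    fix p assume "p \<in> supp (VS.span (newton_vec ` last_antidiag v))"
    then obtain F where "F \<in> VS.span (newton_vec ` last_antidiag v)" "F p \<noteq> 0" unfolding supp_def by auto
    then obtain b where b: "b \<in> {j + 1 - v..j}" "newton_vec (i + j - b, b) p \<noteq> 0"
      using eval_eq_0_on_span[of F _ p] unfolding last_antidiag_def by blast
    obtain k m where "p = (xs k, ys m)" "i + j - b \<le> k" "k < s" "b \<le> m" "m < s"
      by (rule newton_vec_nonzero_at[OF b(2)])
    moreover have "i + j \<le> k + b" using \<open>i + j - b \<le> k\<close> b(1) by simp
    then have "(k, m) \<in> ?Q"
      using calculation b(1) unfolding staircase_above_def by blast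
    ultimately show "p \<in> (\<lambda>(k, m). (xs k, ys m)) ` ?Q" by force
  qed
  then have "card (supp (VS.span (newton_vec ` last_antidiag v))) \<le> card ((\<lambda>(k, m). (xs k, ys m)) ` ?Q)"
    by (rule card_mono[OF finite_imageI[OF finite_staircase_above]])
  also have "\<dots> \<le> card ?Q" by (rule card_image_le[OF finite_staircase_above])
  finally have "card (supp (VS.span (newton_vec ` last_antidiag v))) \<le> card ?Q" .
  then show ?thesis using card_staircase_above_interval_le[OF assms i_le_j j_less_s] by linarith
qed

lemma span_last_antidiag:
  assumes "v \<le> j - i + 1"
  defines "U \<equiv> VS.span (newton_vec ` last_antidiag v)"
  shows "U \<subseteq> C1" and "VS.dim U = v" and "U \<inter> C2 = {0}"
proof -
  note props = last_antidiag_props[OF assms(1)]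
  show "U \<subseteq> C1" "VS.dim U = v"
    using props biorth_dim_span[OF biorth_newton_vec finite_Delta props(3)] card_last_antidiag[OF assms(1)]
    unfolding U_def C1_def by (auto intro!: VS.span_mono image_mono)
  show "U \<inter> C2 = {0}"
  proof (intro equalityI subsetI)
    fix F assume "F \<in> U \<inter> C2"
    then have "F = 0"
      using span_newton_vec_eq_0[of F L2, OF _ L2_subset_Delta] dotp_dual_vec_eq_0_outside[of F] props
        L2_subset_Delta unfolding U_def C2_def by blast
    then show "F \<in> {0}" by simp
  qed (auto simp: U_def C2_def VS.span_zero)
qed

lemma RGHW_primary:
  assumes "1 \<le> v" "v \<le> j - i + 1"
  shows "RGHW v C1 C2 = (s - i) * (s - j) + (\<Sum>t=2..v. (s - i) - (t - 1))"
proof -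
  note U = span_last_antidiag(1)[OF assms(2)] VS.subspace_span span_last_antidiag(2,3)[OF assms(2)]
  have "v - 1 \<le> s - i" using assms(2) j_less_s by linarith
  then have "(s - i) * (s - j) + (\<Sum>t=2..v. (s - i) - (t - 1)) = (s - i) * (s - j + v - 1) - tri (v - 1)"
    by (rule sum_decreasing_closed_form(1)[OF assms(1)])
  moreover have "RGHW v C1 C2 \<le> (s - i) * (s - j) + (\<Sum>t=2..v. (s - i) - (t - 1))"
    using RGHW_le_card_supp[OF U] supp_span_last_antidiag[OF assms] by (rule order_trans)
  moreover have "(s - i) * (s - j + v - 1) - tri (v - 1) \<le> RGHW v C1 C2"
    by (rule le_RGHW[OF _ U]) (rule card_supp_ge_primary[OF _ _ _ _ assms(1)])
  ultimately show ?thesis by linarith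
qed


subsection \<open>The dual codes\<close>

lemma dual_pairs_nonzero_with_L1:
  assumes "U \<subseteq> dual_code P C2" "U \<inter> dual_code P C1 = {0}" "W \<in> U" "W \<noteq> 0"
  shows "\<exists>N\<in>L1. dotp P W (newton_vec N) \<noteq> 0"
proof (rule ccontr)
  assume "\<not> ?thesis"
  moreover have "W \<in> dual_code P (VS.span (newton_vec ` L2))" using assms(1,3) unfolding C2_def by blast
  then have "\<forall>p. p \<notin> P \<longrightarrow> W p = 0" unfolding dual_code_span_newton_vec_iff by blast
  ultimately have "W \<in> dual_code P C1" unfolding C1_def dual_code_span_newton_vec_iff by blast
  then show False using assms(2-4) by blast
qed

lemma bottom_index_in_antidiag:
  assumes "U \<subseteq> dual_code P C2" "U \<inter> dual_code P C1 = {0}" "W \<in> U" "bottom_index W N"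
  shows "N \<in> antidiag"
proof -
  have N: "N \<in> Delta s" "dotp P W (newton_vec N) \<noteq> 0"
    and below: "\<And>N'. N' \<in> Delta s \<Longrightarrow> deglex_rank N' < deglex_rank N \<Longrightarrow> dotp P W (newton_vec N') = 0"
    using assms(4) unfolding bottom_index_iff by auto
  have "W \<in> dual_code P (VS.span (newton_vec ` L2))" using assms(1,3) unfolding C2_def by blast
  then have "N \<notin> L2" using N(2) unfolding dual_code_span_newton_vec_iff by blast
  moreover have "W \<noteq> 0" using N(2) by auto
  then obtain N1 where "N1 \<in> L1" "dotp P W (newton_vec N1) \<noteq> 0"
    using dual_pairs_nonzero_with_L1[OF assms(1-3)] by blast
  then have "N \<in> L1" using below[of N1] N(1) L1_subset_Delta unfolding L1_rank by fastforce
  ultimately show ?thesis using L1_diff_L2 by blast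
qed

lemma card_supp_ge_dual:
  assumes "U \<subseteq> dual_code P C2" "VS.subspace U" "VS.dim U = v" "U \<inter> dual_code P C1 = {0}" "1 \<le> v"
  shows "(i + v) * (j + 1) - tri (v - 1) \<le> card (supp U)"
proof -
  define M where "M = {N. \<exists>W\<in>U. bottom_index W N}"
  have "\<exists>N\<in>Delta s. dotp P W (newton_vec N) \<noteq> 0" if "W \<in> U" "W \<noteq> 0" for W
    using dual_pairs_nonzero_with_L1[OF assms(1,4) that] L1_subset_Delta by blast
  then have "v \<le> card M"
    using dim_le_card_lead_indices[OF finite_Delta assms(2)] assms(3) unfolding M_def by blast
  moreover have "M \<subseteq> antidiag" using bottom_index_in_antidiag assms unfolding M_def by blast
  ultimately obtain B where B: "B \<subseteq> {i..j}" "card B = v" "\<And>b. b \<in> B \<Longrightarrow> (i + j - b, b) \<in> M"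
    using antidiag_subset_choice by blast
  have "M \<subseteq> bottom_indices (supp U)" unfolding M_def bottom_indices_def supp_def by blast
  then have "staircase_below (i + j) B \<subseteq> bottom_indices (supp U)"
    using B by (intro staircase_below_subset_bottom_indices) auto
  then have "card (staircase_below (i + j) B) \<le> card (bottom_indices (supp U))"
    by (rule card_mono[OF finite_bottom_indices])
  also have "\<dots> \<le> card (supp U)" by (rule card_bottom_indices_le[OF finite_supp])
  finally show ?thesis using card_staircase_below_ge[OF B(1,2) assms(5)] by linarith
qed

lemma dual_span_last_antidiag:
  assumes "v \<le> j - i + 1"
  defines "U \<equiv> VS.span (dual_vec ` last_antidiag v)"
  shows "U \<subseteq> dual_code P C2" and "VS.dim U = v" and "U \<inter> dual_code P C1 = {0}"
proof -
  note props = last_antidiag_props[OF assms(1)]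
  show "U \<subseteq> dual_code P C2"
  proof
    fix W assume W: "W \<in> U"
    have "W p = 0" if "p \<notin> P" for p
      by (rule eval_eq_0_on_span[OF W[unfolded U_def]]) (auto simp: dual_vec_def grid_prod_def that)
    moreover have "dotp P W (newton_vec N) = 0" if "N \<in> L2" for N
    proof (rule dotp_eq_0_on_span[OF W[unfolded U_def]])
      fix G assume "G \<in> dual_vec ` last_antidiag v"
      then obtain M where M: "M \<in> last_antidiag v" "G = dual_vec M" by blast
      then have "M \<noteq> N" "M \<in> Delta s" using that props(2,3) by blast+
      then show "dotp P G (newton_vec N) = 0"
        unfolding M(2) dotp_commute[of P "dual_vec M"] using dotp_newton_vec_dual_vec[of M N] by simp
    qed
    ultimately show "W \<in> dual_code P C2" unfolding C2_def dual_code_span_newton_vec_iff by blast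
  qed
  show "VS.dim U = v"
    using biorth_dim_span[OF biorth_dual_vec finite_Delta props(3)] card_last_antidiag[OF assms(1)]
    unfolding U_def by simp
  show "U \<inter> dual_code P C1 = {0}"
  proof (intro equalityI subsetI)
    fix W assume W: "W \<in> U \<inter> dual_code P C1"
    then have "W \<in> dual_code P (VS.span (newton_vec ` L1))" unfolding C1_def by blast
    then have coords: "dotp P W (newton_vec N) = 0" if "N \<in> last_antidiag v" for N
      using that props(1) unfolding dual_code_span_newton_vec_iff by blast
    have "W = (\<Sum>N\<in>last_antidiag v. vscale (dotp P W (newton_vec N)) (dual_vec N))"
      using biorth_expansion[OF biorth_subset[OF biorth_dual_vec props(3)]]
        finite_subset[OF props(3) finite_Delta] W unfolding U_def by blast
    also have "\<dots> = 0"
      using coords by (intro sum.neutral ballI) (simp add: vscale_def fun_eq_iff)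
    finally show "W \<in> {0}" by simp
  qed (auto simp: U_def C1_def dual_code_span_newton_vec_iff VS.span_zero)
qed

lemma RGHW_dual_ge:
  assumes "1 \<le> v" "v \<le> j - i + 1"
  shows "(i + 1) * (j + 1) + (\<Sum>t=2..v. (j + 1) - (t - 1)) \<le> RGHW v (dual_code P C2) (dual_code P C1)"
proof -
  note U = dual_span_last_antidiag(1)[OF assms(2)] VS.subspace_span dual_span_last_antidiag(2,3)[OF assms(2)]
  have "(i + v) * (j + 1) - tri (v - 1) \<le> RGHW v (dual_code P C2) (dual_code P C1)"
    by (rule le_RGHW[OF _ U]) (rule card_supp_ge_dual[OF _ _ _ _ assms(1)])
  moreover have "v - 1 \<le> j + 1" using assms(2) by linarith
  then have "(j + 1) * (i + 1) + (\<Sum>t=2..v. (j + 1) - (t - 1)) = (j + 1) * (i + 1 + v - 1) - tri (v - 1)"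
    by (rule sum_decreasing_closed_form(1)[OF assms(1)])
  ultimately show ?thesis using assms(1) by (simp add: mult.commute)
qed

lemma relative_weights:
  assumes "1 \<le> v" "v \<le> j - i + 1"
  shows "RGHW v C1 C2 = (s - i) * (s - j) + (\<Sum>t=2..v. (s - i) - (t - 1))"
    and "int (RGHW v C1 C2) = int (s - i) * int (s - j + v - 1) - int (v * (v - 1) div 2)"
    and "(i + 1) * (j + 1) + (\<Sum>t=2..v. (j + 1) - (t - 1)) \<le> RGHW v (dual_code P C2) (dual_code P C1)"
    and "int (i + v) * int (j + 1) - int (v * (v - 1) div 2) \<le> int (RGHW v (dual_code P C2) (dual_code P C1))"
proof -
  have "v - 1 \<le> s - i" "v - 1 \<le> j + 1" using assms(2) j_less_s by linarith+
  note primary = int_sum_decreasing_closed_form[OF assms(1) this(1), of "s - j"]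
    and dual = int_sum_decreasing_closed_form[OF assms(1) this(2), of "i + 1"]
  show "RGHW v C1 C2 = (s - i) * (s - j) + (\<Sum>t=2..v. (s - i) - (t - 1))"
    and "int (RGHW v C1 C2) = int (s - i) * int (s - j + v - 1) - int (v * (v - 1) div 2)"
    using RGHW_primary[OF assms] primary by simp_all
  show "(i + 1) * (j + 1) + (\<Sum>t=2..v. (j + 1) - (t - 1)) \<le> RGHW v (dual_code P C2) (dual_code P C1)"
    using RGHW_dual_ge[OF assms] .
  then have "int ((i + 1) * (j + 1) + (\<Sum>t=2..v. (j + 1) - (t - 1)))
      \<le> int (RGHW v (dual_code P C2) (dual_code P C1))" by (simp only: of_nat_le_iff)
  moreover have "i + 1 + v - 1 = i + v" using assms(1) by simp
  then have "int ((i + 1) * (j + 1) + (\<Sum>t=2..v. (j + 1) - (t - 1)))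
      = int (i + v) * int (j + 1) - int (v * (v - 1) div 2)"
    using dual by (metis mult.commute)
  ultimately show "int (i + v) * int (j + 1) - int (v * (v - 1) div 2) \<le> int (RGHW v (dual_code P C2) (dual_code P C1))"
    by linarith
qed

end

theorem mainTheorem5:
  fixes S1 S2 :: "'a::{finite,field} set" and s i j :: nat
  assumes "card S1 = s" and "card S2 = s" and "i \<le> j" and "j < s"
  defines "L1 \<equiv> {N \<in> Delta s. deglex_le N (i, j)}"
      and "L2 \<equiv> {N \<in> Delta s. deglex_less N (j, i)}"
      and "P \<equiv> S1 \<times> S2"
      and "l \<equiv> j - i + 1"
  shows "card P = s ^ 2
    \<and> evcode P L2 \<subset> evcode P L1
    \<and> codim (evcode P L1) (evcode P L2) = l
    \<and> RGHW 1 (evcode P L1) (evcode P L2) = (s - i) * (s - j)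
    \<and> RGHW 1 (dual_code P (evcode P L2)) (dual_code P (evcode P L1)) \<ge> (i + 1) * (j + 1)
    \<and> (\<forall>v\<in>{2..l}.
         RGHW v (evcode P L1) (evcode P L2) = (s - i) * (s - j) + (\<Sum>t=2..v. (s - i) - (t - 1))
       \<and> int (RGHW v (evcode P L1) (evcode P L2))
           = int (s - i) * int (s - j + v - 1) - int (v * (v - 1) div 2)
       \<and> RGHW v (dual_code P (evcode P L2)) (dual_code P (evcode P L1))
           \<ge> (i + 1) * (j + 1) + (\<Sum>t=2..v. (j + 1) - (t - 1))
       \<and> int (RGHW v (dual_code P (evcode P L2)) (dual_code P (evcode P L1)))
           \<ge> int (i + v) * int (j + 1) - int (v * (v - 1) div 2))"
proof -
  obtain xs where "bij_betw xs {..<s} S1"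
    using ex_bij_betw_nat_finite[of S1] assms(1) by (auto simp: atLeast0LessThan)
  moreover obtain ys where "bij_betw ys {..<s} S2"
    using ex_bij_betw_nat_finite[of S2] assms(2) by (auto simp: atLeast0LessThan)
  ultimately interpret G: grid_ij S1 S2 s xs ys i j
    using assms(3,4) by unfold_locales
  have P: "P = G.P" unfolding P_def G.P_def ..
  have codes: "evcode G.P L1 = G.C1" "evcode G.P L2 = G.C2"
    using G.evcode_L1 G.evcode_L2 unfolding L1_def L2_def G.L1_def G.L2_def .
  have "card G.P = s ^ 2"
    using assms(1,2) by (simp add: G.P_def card_cartesian_product power2_eq_square)
  moreover have "codim G.C1 G.C2 = l" using G.codim_C1_C2 unfolding codim_def l_def .
  moreover have "RGHW 1 G.C1 G.C2 = (s - i) * (s - j)"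
    and "(i + 1) * (j + 1) \<le> RGHW 1 (dual_code G.P G.C2) (dual_code G.P G.C1)"
    using G.relative_weights(1,3)[of 1] by simp_all
  moreover have "RGHW v G.C1 G.C2 = (s - i) * (s - j) + (\<Sum>t=2..v. (s - i) - (t - 1))
       \<and> int (RGHW v G.C1 G.C2) = int (s - i) * int (s - j + v - 1) - int (v * (v - 1) div 2)
       \<and> (i + 1) * (j + 1) + (\<Sum>t=2..v. (j + 1) - (t - 1)) \<le> RGHW v (dual_code G.P G.C2) (dual_code G.P G.C1)
       \<and> int (i + v) * int (j + 1) - int (v * (v - 1) div 2) \<le> int (RGHW v (dual_code G.P G.C2) (dual_code G.P G.C1))"
    if "v \<in> {2..l}" for v
    using G.relative_weights[of v] that unfolding l_def by simp
  ultimately show ?thesis unfolding P codes using G.C2_psubset_C1 by blast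
qed

end
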